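(* Let $\delta:\mathcal{B}\to B$ be an invariant derivation. Then there exist $c_0\in\mathbb{C}$ and a $\varphi$-invariant derivation $\partial:\mathcal{F}\to C(G)$ such that $\delta(b)=c_0[\mathbb{L},b]+\delta_\partial(b)+\tilde\delta(b)$ for all $b\in\mathcal{B}$, where $\delta_\partial$ is the unique derivation $\mathcal{B}\to B$ with $\delta_\partial(V)=0$, $\delta_\partial(M_f)=M_{\partial f}$ ($f\in\mathcal F$), and $\tilde\delta:\mathcal{B}\to B$ is approximately inner. Moreover $c_0$, $\partial$ and $\tilde\delta$ are uniquely determined by $\delta$.
   Context: Setup: $G$ is an infinite compact (Hausdorff) abelian group, written additively, and $x_1\in G$ generates a dense cyclic subgroup; $x_n=nx_1$, $\varphi(x)=x+x_1$. $\widehat G$ is the group of continuous characters and $\mathcal{F}$ is their linear span in $C(G)$. Let $H=\ell^2(\mathbb{Z})$ with canonical basis $\{E_l\}$; $VE_l=E_{l+1}$, $M_fE_l=f(x_l)E_l$, $\mathbb{L}E_l=lE_l$. $B=C^*(V,M_f:f\in C(G))$, $\mathcal{B}$ is the $*$-subalgebra generated by $V,V^{-1},M_\chi$ ($\chi\in\widehat G$). For $\theta\in\mathbb{R}$ let $\rho_\theta(b)=e^{i\theta\mathbb{L}}be^{-i\theta\mathbb{L}}$. A derivation $\delta:\mathcal{B}\to B$ (linear, Leibniz rule) is invariant if $\rho_\theta^{-1}(\delta(\rho_\theta(b)))=\delta(b)$ for all $\theta,b$; it is approximately inner if $\delta(b)=\lim_j[y_j,b]$ in norm for some $y_j\in B$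 and all $b\in\mathcal{B}$. A $\varphi$-invariant derivation $\partial:\mathcal F\to C(G)$ is a derivation with $(\partial f)\circ\varphi=\partial(f\circ\varphi)$ for $f\in\mathcal F$. *)

theory Defs
  imports "HOL-Analysis.Analysis"
begin

text \<open>Operators on H = l2(Z) are represented by their matrices with respect to the
canonical basis E_l: the entry a l k is the inner product of E_l with a E_k.\<close>

type_synonym mat = "int \<Rightarrow> int \<Rightarrow> complex"

definition mzero :: mat where "mzero = (\<lambda>l k. 0)"
definition madd :: "mat \<Rightarrow> mat \<Rightarrow> mat" where "madd a b = (\<lambda>l k. a l k + b l k)"
definition msub :: "mat \<Rightarrow> mat \<Rightarrow> mat" where "msub a b = (\<lambda>l k. a l k - b l k)"
definition msc :: "complex \<Rightarrow> mat \<Rightarrow> mat" where "msc c a = (\<lambda>l k. c * a l k)"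
definition mmul :: "mat \<Rightarrow> mat \<Rightarrow> mat" where
  "mmul a b = (\<lambda>l k. infsum (\<lambda>j. a l j * b j k) UNIV)"
definition madj :: "mat \<Rightarrow> mat" where "madj a = (\<lambda>l k. cnj (a k l))"
definition mcomm :: "mat \<Rightarrow> mat \<Rightarrow> mat" where "mcomm a b = msub (mmul a b) (mmul b a)"

text \<open>Values of the sesquilinear form on finitely supported vectors of norm at most 1;
the operator norm is their supremum, and the matrix is a bounded operator iff it is bounded.\<close>
definition form_vals :: "mat \<Rightarrow> real set" where
  "form_vals a = {cmod (\<Sum>l\<in>S. \<Sum>k\<in>S. cnj (y l) * a l k * x k) | S x y.
      finite S \<and> (\<Sum>k\<in>S. (cmod (x k))^2) \<le> 1 \<and> (\<Sum>l\<in>S. (cmod (y l))^2) \<le> 1}"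
definition bounded_mat :: "mat \<Rightarrow> bool" where "bounded_mat a = bdd_above (form_vals a)"
definition mnorm :: "mat \<Rightarrow> real" where "mnorm a = Sup (form_vals a)"

definition mtendsto :: "(nat \<Rightarrow> mat) \<Rightarrow> mat \<Rightarrow> bool" where
  "mtendsto y a \<longleftrightarrow> bounded_mat a \<and> (\<forall>n. bounded_mat (y n)) \<and>
      (\<lambda>n. mnorm (msub (y n) a)) \<longlonglongrightarrow> 0"

definition zmul :: "int \<Rightarrow> 'g::ab_group_add \<Rightarrow> 'g" where
  "zmul n x = (if 0 \<le> n then ((+) x ^^ nat n) 0 else - (((+) x ^^ nat (- n)) 0))"

definition Vop :: mat where "Vop = (\<lambda>l k. if l = k + 1 then 1 else 0)"
definition Vinv :: mat where "Vinv = (\<lambda>l k. if l + 1 = k then 1 else 0)"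
definition Mop :: "'g::ab_group_add \<Rightarrow> ('g \<Rightarrow> complex) \<Rightarrow> mat" where
  "Mop x1 f = (\<lambda>l k. if l = k then f (zmul l x1) else 0)"
text \<open>The commutator [L,b] with the (unbounded) number operator L E_l = l E_l.\<close>
definition Lcomm :: "mat \<Rightarrow> mat" where "Lcomm b = (\<lambda>l k. of_int (l - k) * b l k)"
text \<open>rho_theta(b) = exp(i theta L) b exp(-i theta L).\<close>
definition rho :: "real \<Rightarrow> mat \<Rightarrow> mat" where
  "rho \<theta> b = (\<lambda>l k. exp (\<i> * of_real \<theta> * of_int (l - k)) * b l k)"

definition character :: "('g::{ab_group_add,topological_space} \<Rightarrow> complex) \<Rightarrow> bool" where
  "character ch \<longleftrightarrow> continuous_on UNIV ch \<and> (\<forall>x y. ch (x + y) = ch x * ch y) \<and> (\<forall>x. cmod (ch x) = 1)"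
definition Fspan :: "('g::{ab_group_add,topological_space} \<Rightarrow> complex) set" where
  "Fspan = {f. \<exists>S c. finite S \<and> S \<subseteq> Collect character \<and> f = (\<lambda>x. \<Sum>ch\<in>S. c ch * ch x)}"

inductive_set Bpoly :: "'g::{ab_group_add,topological_space} \<Rightarrow> mat set" for x1 :: 'g where
  gen_V: "Vop \<in> Bpoly x1"
| gen_Vinv: "Vinv \<in> Bpoly x1"
| gen_M: "character ch \<Longrightarrow> Mop x1 ch \<in> Bpoly x1"
| add: "a \<in> Bpoly x1 \<Longrightarrow> b \<in> Bpoly x1 \<Longrightarrow> madd a b \<in> Bpoly x1"
| scal: "a \<in> Bpoly x1 \<Longrightarrow> msc c a \<in> Bpoly x1"
| mul: "a \<in> Bpoly x1 \<Longrightarrow> b \<in> Bpoly x1 \<Longrightarrow> mmul a b \<in> Bpoly x1"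
| adj: "a \<in> Bpoly x1 \<Longrightarrow> madj a \<in> Bpoly x1"

inductive_set Balg0 :: "'g::{ab_group_add,topological_space} \<Rightarrow> mat set" for x1 :: 'g where
  gen_V: "Vop \<in> Balg0 x1"
| gen_M: "continuous_on UNIV f \<Longrightarrow> Mop x1 f \<in> Balg0 x1"
| add: "a \<in> Balg0 x1 \<Longrightarrow> b \<in> Balg0 x1 \<Longrightarrow> madd a b \<in> Balg0 x1"
| scal: "a \<in> Balg0 x1 \<Longrightarrow> msc c a \<in> Balg0 x1"
| mul: "a \<in> Balg0 x1 \<Longrightarrow> b \<in> Balg0 x1 \<Longrightarrow> mmul a b \<in> Balg0 x1"
| adj: "a \<in> Balg0 x1 \<Longrightarrow> madj a \<in> Balg0 x1"

definition Bstar :: "'g::{ab_group_add,topological_space} \<Rightarrow> mat set" where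
  "Bstar x1 = {b. \<exists>y. (\<forall>n. y n \<in> Balg0 x1) \<and> mtendsto y b}"

definition derivation_on :: "mat set \<Rightarrow> (mat \<Rightarrow> mat) \<Rightarrow> bool" where
  "derivation_on A d \<longleftrightarrow>
     (\<forall>a\<in>A. \<forall>b\<in>A. d (madd a b) = madd (d a) (d b)) \<and>
     (\<forall>c. \<forall>a\<in>A. d (msc c a) = msc c (d a)) \<and>
     (\<forall>a\<in>A. \<forall>b\<in>A. d (mmul a b) = madd (mmul (d a) b) (mmul a (d b)))"

definition invariant_der :: "'g::{ab_group_add,topological_space} \<Rightarrow> (mat \<Rightarrow> mat) \<Rightarrow> bool" where
  "invariant_der x1 d \<longleftrightarrow> (\<forall>\<theta>. \<forall>b\<in>Bpoly x1. rho (- \<theta>) (d (rho \<theta> b)) = d b)"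

definition approx_inner :: "'g::{ab_group_add,topological_space} \<Rightarrow> (mat \<Rightarrow> mat) \<Rightarrow> bool" where
  "approx_inner x1 d \<longleftrightarrow> d ` Bpoly x1 \<subseteq> Bstar x1 \<and>
     (\<exists>y. (\<forall>j. y j \<in> Bstar x1) \<and> (\<forall>b\<in>Bpoly x1. mtendsto (\<lambda>j. mcomm (y j) b) (d b)))"

definition phi_inv_derivation :: "'g::{ab_group_add,topological_space} \<Rightarrow> (('g \<Rightarrow> complex) \<Rightarrow> ('g \<Rightarrow> complex)) \<Rightarrow> bool" where
  "phi_inv_derivation x1 D \<longleftrightarrow>
     (\<forall>f\<in>Fspan. continuous_on UNIV (D f)) \<and>
     (\<forall>f\<in>Fspan. \<forall>g\<in>Fspan. D (\<lambda>x. f x + g x) = (\<lambda>x. D f x + D g x)) \<and>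
     (\<forall>c. \<forall>f\<in>Fspan. D (\<lambda>x. c * f x) = (\<lambda>x. c * D f x)) \<and>
     (\<forall>f\<in>Fspan. \<forall>g\<in>Fspan. D (\<lambda>x. f x * g x) = (\<lambda>x. D f x * g x + f x * D g x)) \<and>
     (\<forall>f\<in>Fspan. (\<lambda>x. D f (x + x1)) = D (\<lambda>x. f (x + x1)))"

definition is_delta_partial :: "'g::{ab_group_add,topological_space} \<Rightarrow> (('g \<Rightarrow> complex) \<Rightarrow> ('g \<Rightarrow> complex)) \<Rightarrow> (mat \<Rightarrow> mat) \<Rightarrow> bool" where
  "is_delta_partial x1 D d \<longleftrightarrow> derivation_on (Bpoly x1) d \<and> d ` Bpoly x1 \<subseteq> Bstar x1 \<and>
     d Vop = mzero \<and> (\<forall>f\<in>Fspan. d (Mop x1 f) = Mop x1 (D f))"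

definition decomposition :: "'g::{ab_group_add,topological_space} \<Rightarrow> (mat \<Rightarrow> mat) \<Rightarrow> complex \<Rightarrow>
    (('g \<Rightarrow> complex) \<Rightarrow> ('g \<Rightarrow> complex)) \<Rightarrow> (mat \<Rightarrow> mat) \<Rightarrow> bool" where
  "decomposition x1 \<delta> c0 D dt \<longleftrightarrow>
     phi_inv_derivation x1 D \<and> approx_inner x1 dt \<and>
     (\<exists>d. is_delta_partial x1 D d \<and>
          (\<forall>d'. is_delta_partial x1 D d' \<longrightarrow> (\<forall>b\<in>Bpoly x1. d' b = d b)) \<and>
          (\<forall>b\<in>Bpoly x1. \<delta> b = madd (madd (msc c0 (Lcomm b)) (d b)) (dt b)))"

end

theory Submission
  imports Defs
begin

text \<open>Gauge invariance forces \<open>\<delta>(V)\<close> onto the subdiagonal, \<open>\<delta>(V) = V M\<^sub>g\<close>, and makes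
  \<open>\<delta>(M\<^sub>f)\<close> diagonal, \<open>\<delta>(M\<^sub>f) = M\<^sub>\<partial>\<^sub>f\<close>; as the diagonals of elements of \<open>B\<close> are continuous
  functions sampled along the dense orbit \<open>x\<^sub>l\<close>, \<open>g\<close> and \<open>\<partial>f\<close> are continuous and \<open>\<partial>\<close> is a
  \<open>\<phi>\<close>-invariant derivation. A limit point \<open>c\<^sub>0\<close> of the Birkhoff averages of \<open>g\<close> makes
  \<open>g - c\<^sub>0\<close> a uniform limit of coboundaries \<open>h\<^sub>j \<circ> \<phi> - h\<^sub>j\<close>. The Schur multiplier by a
  potential \<open>T\<close> with \<open>T(l+1) - T(l) = g(x\<^sub>l) - c\<^sub>0\<close> is then the norm limit of \<open>[M\<^sub>h\<^sub>j, \<cdot>]\<close>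
  on banded matrices, hence approximately inner, and subtracting it and \<open>c\<^sub>0[\<bbbL>, \<cdot>]\<close> from
  \<open>\<delta>\<close> leaves \<open>\<delta>\<^sub>\<partial>\<close>. Conversely an approximately inner map vanishes on the diagonal of
  \<open>M\<^sub>f\<close>, and cannot shift the subdiagonal of \<open>V\<close> by a nonzero constant, since along it
  \<open>[y, V]\<close> telescopes to a bounded quantity; this gives uniqueness.\<close>

lemma zmul_0 [simp]: "zmul 0 x = 0"
  by (simp add: zmul_def)

lemma zmul_succ: "zmul (n + 1) x = zmul n x + (x::'g::ab_group_add)"
proof -
  have iter_Suc: "((+) x ^^ Suc k) 0 = ((+) x ^^ k) 0 + x" for k
    by (simp add: add.commute)
  show ?thesis
  proof (cases "0 \<le> n")
    case True
    then have "nat (n + 1) = Suc (nat n)" by simp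
    with True show ?thesis unfolding zmul_def using iter_Suc[of "nat n"] by simp
  next
    case False
    then obtain m where m: "n = - int (Suc m)"
      by (metis int_cases le_refl neg_0_le_iff_le nat_le_linear of_nat_0_le_iff)
    show ?thesis
    proof (cases m)
      case 0
      then show ?thesis using m by (simp add: zmul_def)
    next
      case (Suc p)
      then have "nat (- n) = Suc (Suc p)" "nat (- (n + 1)) = Suc p" "\<not> 0 \<le> n + 1"
        using m by auto
      with False show ?thesis unfolding zmul_def using iter_Suc[of "Suc p"] by simp
    qed
  qed
qed

lemma zmul_add: "zmul (a + b) x = zmul a x + zmul b (x::'g::ab_group_add)"
proof (induction b rule: int_induct[where k = 0])
  case base
  then show ?case by simp
next
  case (step1 i)
  then show ?case by (metis add.assoc zmul_succ)
next
  case (step2 i)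
  then show ?case
    using zmul_succ[of "a + (i - 1)" x] zmul_succ[of "i - 1" x] by (simp add: algebra_simps)
qed

lemma infsum_finite_support:
  fixes f :: "'a \<Rightarrow> 'b::{comm_monoid_add, t2_space}"
  assumes "finite F" "\<And>j. j \<notin> F \<Longrightarrow> f j = 0"
  shows "infsum f UNIV = sum f F"
  using infsum_cong_neutral[of F UNIV f f] assms by auto

lemma infsum_single_support:
  fixes f :: "'a \<Rightarrow> 'b::{comm_monoid_add, t2_space}"
  assumes "\<And>j. j \<noteq> a \<Longrightarrow> f j = 0"
  shows "infsum f UNIV = f a"
  using infsum_finite_support[of "{a}" f] assms by auto

definition banded :: "nat \<Rightarrow> mat \<Rightarrow> bool" where
  "banded N a \<longleftrightarrow> (\<forall>l k. int N < \<bar>l - k\<bar> \<longrightarrow> a l k = 0)"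

lemma mmul_banded_left:
  assumes "banded N a"
  shows "mmul a X l k = (\<Sum>j\<in>{l - int N..l + int N}. a l j * X j k)"
  unfolding mmul_def by (rule infsum_finite_support) (use assms in \<open>auto simp: banded_def\<close>)

lemma mmul_banded_right:
  assumes "banded N b"
  shows "mmul X b l k = (\<Sum>j\<in>{k - int N..k + int N}. X l j * b j k)"
  unfolding mmul_def by (rule infsum_finite_support) (use assms in \<open>auto simp: banded_def\<close>)

lemma mmul_Mop_left: "mmul (Mop x1 h) X l k = h (zmul l x1) * X l k"
  unfolding mmul_def by (subst infsum_single_support[where a = l]) (auto simp: Mop_def)

lemma mmul_Mop_right: "mmul X (Mop x1 h) l k = X l k * h (zmul k x1)"
  unfolding mmul_def by (subst infsum_single_support[where a = k]) (auto simp: Mop_def)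

lemma mmul_V_left: "mmul Vop X l k = X (l - 1) k"
  unfolding mmul_def by (subst infsum_single_support[where a = "l - 1"]) (auto simp: Vop_def)

lemma mmul_V_right: "mmul X Vop l k = X l (k + 1)"
  unfolding mmul_def by (subst infsum_single_support[where a = "k + 1"]) (auto simp: Vop_def)

lemma mmul_Vinv_left: "mmul Vinv X l k = X (l + 1) k"
  unfolding mmul_def by (subst infsum_single_support[where a = "l + 1"]) (auto simp: Vinv_def)

lemma banded_mono: "banded N a \<Longrightarrow> N \<le> M \<Longrightarrow> banded M a"
  unfolding banded_def by force

lemma banded_Vop: "banded 1 Vop"
  unfolding banded_def Vop_def by auto

lemma banded_Mop: "banded 0 (Mop x1 h)"
  unfolding banded_def Mop_def by auto

lemma banded_madd: "banded N a \<Longrightarrow> banded N b \<Longrightarrow> banded N (madd a b)"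
  unfolding banded_def madd_def by auto

lemma banded_msc: "banded N a \<Longrightarrow> banded N (msc c a)"
  unfolding banded_def msc_def by auto

lemma banded_madj: "banded N a \<Longrightarrow> banded N (madj a)"
  unfolding banded_def madj_def by (auto simp: abs_minus_commute)

lemma banded_mmul:
  assumes "banded N a" "banded M b"
  shows "banded (N + M) (mmul a b)"
  unfolding banded_def
proof (intro allI impI)
  fix l k assume "int (N + M) < \<bar>l - k\<bar>"
  then have "int N < \<bar>l - j\<bar> \<or> int M < \<bar>j - k\<bar>" for j by linarith
  then have "a l j * b j k = 0" for j using assms unfolding banded_def by (metis mult_eq_0_iff)
  then show "mmul a b l k = 0" unfolding mmul_def by (simp add: infsum_0)
qed

lemma msub_eq: "msub a b = madd a (msc (-1) b)"
  by (simp add: msub_def madd_def msc_def fun_eq_iff)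

lemma msub_self: "msub a a = mzero"
  by (simp add: msub_def mzero_def fun_eq_iff)

lemma Vinv_eq_madj_Vop: "Vinv = madj Vop"
  by (auto simp: Vinv_def Vop_def madj_def fun_eq_iff)

lemma madj_Vinv: "madj Vinv = Vop"
  by (auto simp: Vinv_def Vop_def madj_def fun_eq_iff)

lemma madj_madd: "madj (madd a b) = madd (madj a) (madj b)"
  by (simp add: madj_def madd_def fun_eq_iff)

lemma madj_msc: "madj (msc c a) = msc (cnj c) (madj a)"
  by (simp add: madj_def msc_def fun_eq_iff)

lemma madj_mmul: "madj (mmul a b) = mmul (madj b) (madj a)"
  by (simp add: madj_def mmul_def fun_eq_iff mult.commute flip: infsum_cnj)

lemma madj_madj: "madj (madj a) = a"
  by (simp add: madj_def)

lemma Mop_add: "Mop x1 (\<lambda>x. f x + g x) = madd (Mop x1 f) (Mop x1 g)"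
  by (auto simp: Mop_def madd_def fun_eq_iff)

lemma Mop_scal: "Mop x1 (\<lambda>x. c * f x) = msc c (Mop x1 f)"
  by (auto simp: Mop_def msc_def fun_eq_iff)

lemma Mop_mul: "Mop x1 (\<lambda>x. f x * g x) = mmul (Mop x1 f) (Mop x1 g)"
  by (auto simp: mmul_Mop_left fun_eq_iff) (auto simp: Mop_def)

lemma Mop_zero: "Mop x1 (\<lambda>x. 0) = msc 0 Vop"
  by (auto simp: Mop_def msc_def fun_eq_iff)

lemma madj_Mop: "madj (Mop x1 f) = Mop x1 (\<lambda>x. cnj (f x))"
  by (auto simp: Mop_def madj_def fun_eq_iff)

lemma Mop_translate: "Mop x1 (\<lambda>x. f (x + x1)) = mmul Vinv (mmul (Mop x1 f) Vop)"
  unfolding fun_eq_iff mmul_Vinv_left mmul_V_right mmul_Mop_left by (auto simp: Vop_def Mop_def zmul_succ)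

lemma Mop_V_commute: "mmul (Mop x1 f) Vop = mmul Vop (Mop x1 (\<lambda>x. f (x + x1)))"
proof (intro ext)
  fix l k
  have "zmul (l - 1) x1 + x1 = zmul l x1"
    using zmul_succ[of "l - 1" x1] by simp
  then show "mmul (Mop x1 f) Vop l k = mmul Vop (Mop x1 (\<lambda>x. f (x + x1))) l k"
    unfolding mmul_V_left mmul_V_right mmul_Mop_left by (auto simp: Vop_def Mop_def)
qed

lemma mmul_V_Vinv: "mmul Vop Vinv = Mop (0::int) (\<lambda>_. 1)"
  by (auto simp: mmul_V_left fun_eq_iff Vinv_def Mop_def)

lemma mcomm_Mop: "mcomm (Mop x1 h) b l k = (h (zmul l x1) - h (zmul k x1)) * b l k"
  by (simp add: mcomm_def msub_def mmul_Mop_left mmul_Mop_right algebra_simps)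

lemma mcomm_V_subdiag: "mcomm Y Vop (l + 1) l = Y (l + 1) (l + 1) - Y l l"
  by (simp add: mcomm_def msub_def mmul_V_right mmul_V_left)


lemma form_vals_0: "0 \<in> form_vals a"
  unfolding form_vals_def by (rule CollectI, rule exI[of _ "{}"]) auto

lemma mnorm_upper: "bounded_mat a \<Longrightarrow> v \<in> form_vals a \<Longrightarrow> v \<le> mnorm a"
  unfolding bounded_mat_def mnorm_def by (rule cSup_upper)

lemma mnorm_nonneg: "bounded_mat a \<Longrightarrow> 0 \<le> mnorm a"
  using mnorm_upper form_vals_0 by blast

lemma mnorm_least:
  assumes "\<And>v. v \<in> form_vals a \<Longrightarrow> v \<le> C"
  shows "bounded_mat a" "mnorm a \<le> C"
  using assms form_vals_0 unfolding bounded_mat_def mnorm_def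
  by (auto intro!: cSup_least simp: bdd_above_def)

lemma form_valsE:
  assumes "v \<in> form_vals a"
  obtains S x y where "finite S" "(\<Sum>k\<in>S. (cmod (x k))^2) \<le> 1" "(\<Sum>l\<in>S. (cmod (y l))^2) \<le> 1"
    "v = cmod (\<Sum>l\<in>S. \<Sum>k\<in>S. cnj (y l) * a l k * x k)"
  using assms unfolding form_vals_def by blast

lemma form_valsI:
  assumes "finite S" "(\<Sum>k\<in>S. (cmod (x k))^2) \<le> 1" "(\<Sum>l\<in>S. (cmod (y l))^2) \<le> 1"
  shows "cmod (\<Sum>l\<in>S. \<Sum>k\<in>S. cnj (y l) * a l k * x k) \<in> form_vals a"
  using assms unfolding form_vals_def by blast

lemma norm_entry_le_mnorm:
  assumes "bounded_mat a"
  shows "cmod (a l k) \<le> mnorm a"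
proof -
  define x where "x = (\<lambda>i. if i = k then 1 else 0::complex)"
  define y where "y = (\<lambda>i. if i = l then 1 else 0::complex)"
  have "(\<Sum>i\<in>{l,k}. (cmod (x i))^2) = 1" "(\<Sum>i\<in>{l,k}. (cmod (y i))^2) = 1"
       "(\<Sum>i\<in>{l,k}. \<Sum>j\<in>{l,k}. cnj (y i) * a i j * x j) = a l k"
    unfolding x_def y_def by (cases "l = k"; simp)+
  then have "cmod (a l k) \<in> form_vals a"
    using form_valsI[of "{l,k}" x y a] by simp
  then show ?thesis using mnorm_upper assms by blast
qed

lemma form_vals_madd_le:
  assumes "bounded_mat a" "bounded_mat b" "v \<in> form_vals (madd a b)"
  shows "v \<le> mnorm a + mnorm b"
proof -
  obtain S x y where S: "finite S" "(\<Sum>k\<in>S. (cmod (x k))^2) \<le> 1" "(\<Sum>l\<in>S. (cmod (y l))^2) \<le> 1"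
    and v: "v = cmod (\<Sum>l\<in>S. \<Sum>k\<in>S. cnj (y l) * madd a b l k * x k)"
    using assms(3) by (rule form_valsE)
  let ?form = "\<lambda>a. \<Sum>l\<in>S. \<Sum>k\<in>S. cnj (y l) * a l k * x k"
  have "v = cmod (?form a + ?form b)"
    unfolding v madd_def by (simp add: algebra_simps sum.distrib)
  also have "\<dots> \<le> cmod (?form a) + cmod (?form b)"
    by (rule norm_triangle_ineq)
  also have "\<dots> \<le> mnorm a + mnorm b"
    using mnorm_upper[OF assms(1) form_valsI[OF S, of a]] mnorm_upper[OF assms(2) form_valsI[OF S, of b]]
    by linarith
  finally show ?thesis .
qed

lemma form_vals_msc_le:
  assumes "bounded_mat a" "v \<in> form_vals (msc c a)"
  shows "v \<le> cmod c * mnorm a"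
proof -
  obtain S x y where S: "finite S" "(\<Sum>k\<in>S. (cmod (x k))^2) \<le> 1" "(\<Sum>l\<in>S. (cmod (y l))^2) \<le> 1"
    and v: "v = cmod (\<Sum>l\<in>S. \<Sum>k\<in>S. cnj (y l) * msc c a l k * x k)"
    using assms(2) by (rule form_valsE)
  have "(\<Sum>l\<in>S. \<Sum>k\<in>S. cnj (y l) * msc c a l k * x k) = c * (\<Sum>l\<in>S. \<Sum>k\<in>S. cnj (y l) * a l k * x k)"
    unfolding msc_def by (simp add: algebra_simps sum_distrib_left)
  then have "v = cmod c * cmod (\<Sum>l\<in>S. \<Sum>k\<in>S. cnj (y l) * a l k * x k)"
    using v by (simp add: norm_mult)
  also have "\<dots> \<le> cmod c * mnorm a"
    using mnorm_upper[OF assms(1) form_valsI[OF S, of a]] by (simp add: mult_left_mono)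
  finally show ?thesis .
qed

lemma bounded_madd: "bounded_mat a \<Longrightarrow> bounded_mat b \<Longrightarrow> bounded_mat (madd a b)"
  using mnorm_least(1) form_vals_madd_le by blast

lemma mnorm_madd: "bounded_mat a \<Longrightarrow> bounded_mat b \<Longrightarrow> mnorm (madd a b) \<le> mnorm a + mnorm b"
  using mnorm_least(2) form_vals_madd_le by blast

lemma bounded_msc: "bounded_mat a \<Longrightarrow> bounded_mat (msc c a)"
  using mnorm_least(1) form_vals_msc_le by blast

lemma mnorm_msc: "bounded_mat a \<Longrightarrow> mnorm (msc c a) \<le> cmod c * mnorm a"
  using mnorm_least(2) form_vals_msc_le by blast

lemma bounded_msub: "bounded_mat a \<Longrightarrow> bounded_mat b \<Longrightarrow> bounded_mat (msub a b)"
  unfolding msub_eq by (intro bounded_madd bounded_msc)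

lemma mnorm_mzero: "bounded_mat mzero" "mnorm mzero = 0"
proof -
  have "v \<le> 0" if "v \<in> form_vals mzero" for v
    using that by (auto elim!: form_valsE simp: mzero_def)
  then show "bounded_mat mzero" "mnorm mzero = 0"
    using mnorm_least[of mzero 0] mnorm_nonneg[of mzero] by auto
qed

lemma card_band_le:
  assumes "finite S"
  shows "(\<Sum>k\<in>S. (if \<bar>l - k\<bar> \<le> int N then 1 else 0::real)) \<le> 2 * real N + 1"
proof -
  define I where "I = {l - int N..l + int N}"
  have "(\<Sum>k\<in>S. (if \<bar>l - k\<bar> \<le> int N then 1 else 0::real)) = (\<Sum>k\<in>S. (if k \<in> I then 1 else 0::real))"
    by (intro sum.cong) (auto simp: I_def)
  also have "\<dots> = real (card (S \<inter> I))"
    using sum.inter_restrict[OF assms, of "\<lambda>_. 1::real" I] by simp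
  also have "\<dots> \<le> real (card I)" by (intro of_nat_mono card_mono) (auto simp: I_def)
  also have "card I = 2 * N + 1" unfolding I_def by simp
  finally show ?thesis by simp
qed

text \<open>Schur's test for banded matrices: each term of the form is split as
  \<open>|y_l a_lk x_k| \<le> C/2 (|y_l|\<^sup>2 + |x_k|\<^sup>2)\<close>, and each row and column meets the band
  in at most \<open>2N + 1\<close> entries.\<close>
lemma banded_form_vals_le:
  assumes band: "banded N a" and C: "\<And>l k. cmod (a l k) \<le> C" and v: "v \<in> form_vals a"
  shows "v \<le> (2 * real N + 1) * C"
proof -
  obtain S x y where S: "finite S" and sx: "(\<Sum>k\<in>S. (cmod (x k))^2) \<le> 1"
    and sy: "(\<Sum>l\<in>S. (cmod (y l))^2) \<le> 1" and v: "v = cmod (\<Sum>l\<in>S. \<Sum>k\<in>S. cnj (y l) * a l k * x k)"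
    using v by (rule form_valsE)
  have C0: "0 \<le> C" using C[of 0 0] norm_ge_zero order_trans by blast
  define w where "w = (\<lambda>l k. if \<bar>l - k\<bar> \<le> int N then 1 else 0::real)"
  have term_le: "cmod (cnj (y l) * a l k * x k) \<le> C / 2 * (w l k * (cmod (y l))^2 + w l k * (cmod (x k))^2)"
    for l k
  proof (cases "\<bar>l - k\<bar> \<le> int N")
    case False
    then show ?thesis using band by (simp add: w_def banded_def)
  next
    case True
    have "cmod (cnj (y l) * a l k * x k) \<le> cmod (y l) * C * cmod (x k)"
      by (simp add: norm_mult) (intro mult_right_mono mult_left_mono C; simp)
    also have "\<dots> = C / 2 * (2 * (cmod (y l) * cmod (x k)))" by simp
    also have "\<dots> \<le> C / 2 * ((cmod (y l))^2 + (cmod (x k))^2)"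
      using sum_squares_bound[of "cmod (y l)" "cmod (x k)"] C0
      by (intro mult_left_mono) (auto simp: power2_eq_square)
    finally show ?thesis using True by (simp add: w_def)
  qed
  have rows: "(\<Sum>l\<in>S. (cmod (y l))^2 * (\<Sum>k\<in>S. w l k)) \<le> 2 * real N + 1"
    using order_trans[OF sum_mono[of S _ "\<lambda>l. (cmod (y l))^2 * (2 * real N + 1)"]] card_band_le[OF S] sy
    by (simp add: w_def mult_left_mono flip: sum_distrib_right)
  have "(\<Sum>l\<in>S. \<Sum>k\<in>S. w l k * (cmod (x k))^2) = (\<Sum>k\<in>S. (cmod (x k))^2 * (\<Sum>l\<in>S. w l k))"
    by (subst sum.swap) (simp add: sum_distrib_right algebra_simps)
  also have "\<dots> \<le> 2 * real N + 1"
    using order_trans[OF sum_mono[of S _ "\<lambda>k. (cmod (x k))^2 * (2 * real N + 1)"]] card_band_le[OF S] sx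
    by (simp add: w_def mult_left_mono abs_minus_commute flip: sum_distrib_right)
  finally have cols: "(\<Sum>l\<in>S. \<Sum>k\<in>S. w l k * (cmod (x k))^2) \<le> 2 * real N + 1" .
  have "v \<le> (\<Sum>l\<in>S. \<Sum>k\<in>S. cmod (cnj (y l) * a l k * x k))"
    unfolding v by (rule order_trans[OF norm_sum sum_mono[OF norm_sum]])
  also have "\<dots> \<le> (\<Sum>l\<in>S. \<Sum>k\<in>S. C / 2 * (w l k * (cmod (y l))^2 + w l k * (cmod (x k))^2))"
    by (intro sum_mono term_le)
  also have "\<dots> = C / 2 * ((\<Sum>l\<in>S. (cmod (y l))^2 * (\<Sum>k\<in>S. w l k)) + (\<Sum>l\<in>S. \<Sum>k\<in>S. w l k * (cmod (x k))^2))"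
    by (simp add: sum_distrib_left sum_distrib_right sum.distrib algebra_simps)
  also have "\<dots> \<le> C / 2 * ((2 * real N + 1) + (2 * real N + 1))"
    using rows cols C0 by (intro mult_left_mono) auto
  finally show ?thesis by (simp add: algebra_simps)
qed

lemma banded_bounded:
  assumes "banded N a" "\<And>l k. cmod (a l k) \<le> C"
  shows "bounded_mat a" "mnorm a \<le> (2 * real N + 1) * C"
  using mnorm_least[of a "(2 * real N + 1) * C"] banded_form_vals_le[OF assms] by auto

lemma mtendsto_entries:
  assumes "mtendsto y a" "0 < e"
  shows "\<exists>J. \<forall>j\<ge>J. \<forall>l k. cmod (y j l k - a l k) \<le> e"
proof -
  have b: "bounded_mat a" "\<And>n. bounded_mat (y n)" and t: "(\<lambda>n. mnorm (msub (y n) a)) \<longlonglongrightarrow> 0"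
    using assms(1) unfolding mtendsto_def by auto
  obtain J where J: "\<forall>n\<ge>J. norm (mnorm (msub (y n) a) - 0) < e"
    using LIMSEQ_D[OF t assms(2)] by blast
  have "cmod (y j l k - a l k) \<le> e" if "j \<ge> J" for j l k
  proof -
    have "cmod (y j l k - a l k) \<le> mnorm (msub (y j) a)"
      using norm_entry_le_mnorm[OF bounded_msub[OF b(2) b(1)], of j l k] by (simp add: msub_def)
    also have "\<dots> \<le> e" using J that by auto
    finally show ?thesis .
  qed
  then show ?thesis by blast
qed

lemma mtendstoI:
  assumes "bounded_mat a" "\<And>n. bounded_mat (y n)"
    and "\<And>n. mnorm (msub (y n) a) \<le> r n" "r \<longlonglongrightarrow> 0"
  shows "mtendsto y a"
proof -
  have "norm (mnorm (msub (y n) a)) \<le> r n" for n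
    using assms(3)[of n] mnorm_nonneg[OF bounded_msub[OF assms(2,1)]] by simp
  then have "(\<lambda>n. mnorm (msub (y n) a)) \<longlonglongrightarrow> 0"
    by (intro Lim_null_comparison[OF _ assms(4)] always_eventually allI)
  with assms(1,2) show ?thesis unfolding mtendsto_def by blast
qed

lemma mtendsto_madd:
  assumes "mtendsto y a" "mtendsto z b"
  shows "mtendsto (\<lambda>n. madd (y n) (z n)) (madd a b)"
proof -
  have ya: "bounded_mat a" "\<And>n. bounded_mat (y n)" and t1: "(\<lambda>n. mnorm (msub (y n) a)) \<longlonglongrightarrow> 0"
    using assms(1) unfolding mtendsto_def by auto
  have zb: "bounded_mat b" "\<And>n. bounded_mat (z n)" and t2: "(\<lambda>n. mnorm (msub (z n) b)) \<longlonglongrightarrow> 0"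
    using assms(2) unfolding mtendsto_def by auto
  have "msub (madd (y n) (z n)) (madd a b) = madd (msub (y n) a) (msub (z n) b)" for n
    by (simp add: msub_def madd_def fun_eq_iff)
  then show ?thesis
    using mnorm_madd bounded_msub ya zb tendsto_add[OF t1 t2]
    by (intro mtendstoI[where r = "\<lambda>n. mnorm (msub (y n) a) + mnorm (msub (z n) b)"] bounded_madd) auto
qed

lemma mtendsto_msc:
  assumes "mtendsto y a"
  shows "mtendsto (\<lambda>n. msc c (y n)) (msc c a)"
proof -
  have ya: "bounded_mat a" "\<And>n. bounded_mat (y n)" and t: "(\<lambda>n. mnorm (msub (y n) a)) \<longlonglongrightarrow> 0"
    using assms(1) unfolding mtendsto_def by auto
  have "msub (msc c (y n)) (msc c a) = msc c (msub (y n) a)" for n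
    by (simp add: msub_def msc_def fun_eq_iff algebra_simps)
  then show ?thesis
    using mnorm_msc bounded_msub ya tendsto_mult_left[OF t, of "cmod c"]
    by (intro mtendstoI[where r = "\<lambda>n. cmod c * mnorm (msub (y n) a)"] bounded_msc) auto
qed

lemma norm_diff_le_steps:
  fixes F :: "int \<Rightarrow> 'a::real_normed_vector"
  assumes step: "\<And>i. norm (F (i + 1) - F i) \<le> e"
  shows "norm (F l - F k) \<le> of_int \<bar>l - k\<bar> * e"
proof -
  have fwd: "norm (F (k + int n) - F k) \<le> of_nat n * e" for k n
  proof (induction n)
    case (Suc n)
    have "F (k + int (Suc n)) - F k = (F (k + int n + 1) - F (k + int n)) + (F (k + int n) - F k)"
      by (simp add: algebra_simps)
    then have "norm (F (k + int (Suc n)) - F k)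
        \<le> norm (F (k + int n + 1) - F (k + int n)) + norm (F (k + int n) - F k)"
      by (metis norm_triangle_ineq)
    also have "\<dots> \<le> e + of_nat n * e" using step Suc by (intro add_mono) auto
    finally show ?case by (simp add: algebra_simps)
  qed simp
  show ?thesis
  proof (cases "k \<le> l")
    case True
    then show ?thesis using fwd[of k "nat (l - k)"] by simp
  next
    case False
    then show ?thesis using fwd[of l "nat (k - l)"] by (simp add: norm_minus_commute)
  qed
qed

definition potential :: "(int \<Rightarrow> 'a::ab_group_add) \<Rightarrow> int \<Rightarrow> 'a" where
  "potential q l = (if 0 \<le> l then (\<Sum>i\<in>{0..<l}. q i) else - (\<Sum>i\<in>{l..<0}. q i))"

lemma potential_step: "potential q (l + 1) - potential q l = q l"
proof -
  consider "0 \<le> l" | "l = -1" | "l < -1" by linarith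
  then show ?thesis
  proof cases
    case 1
    then have "{0..<l + 1} = insert l {0..<l}" by auto
    with 1 show ?thesis by (simp add: potential_def)
  next
    case 2
    moreover have "{-1..<0::int} = {-1}" by auto
    ultimately show ?thesis by (simp add: potential_def)
  next
    case 3
    then have "{l..<0} = insert l {l + 1..<0}" by auto
    with 3 show ?thesis by (simp add: potential_def)
  qed
qed


lemma banded_Bpoly: "a \<in> Bpoly x1 \<Longrightarrow> \<exists>N. banded N a"
proof (induction rule: Bpoly.induct)
  case (add a b)
  then obtain N M where "banded N a" "banded M b" by blast
  then have "banded (max N M) (madd a b)"
    by (intro banded_madd banded_mono[of _ _ "max N M"]) auto
  then show ?case by blast
next
  case gen_Vinv
  show ?case unfolding Vinv_eq_madj_Vop using banded_madj[OF banded_Vop] by blast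
next
  case (mul a b)
  then show ?case using banded_mmul by blast
qed (use banded_Vop banded_Mop banded_madj banded_msc in blast)+

lemma character_Fspan: "character ch \<Longrightarrow> ch \<in> Fspan"
  unfolding Fspan_def by (rule CollectI, rule exI[of _ "{ch}"], rule exI[of _ "\<lambda>_. 1"]) auto

lemma character_cnj: "character ch \<Longrightarrow> character (\<lambda>x. cnj (ch x))"
  unfolding character_def by (auto intro!: continuous_intros)

lemma continuous_on_Fspan: "f \<in> Fspan \<Longrightarrow> continuous_on UNIV f"
  unfolding Fspan_def character_def by (auto intro!: continuous_intros)

lemma Mop_Fspan_Bpoly:
  assumes "f \<in> Fspan"
  shows "Mop x1 f \<in> Bpoly x1"
proof -
  obtain S c where "finite S" "S \<subseteq> Collect character" and f: "f = (\<lambda>x. \<Sum>ch\<in>S. c ch * ch x)"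
    using assms unfolding Fspan_def by blast
  then show ?thesis
  proof (induction S arbitrary: f rule: finite_induct)
    case empty
    then show ?case using Mop_zero[of x1] by (simp add: Bpoly.scal Bpoly.gen_V)
  next
    case (insert ch S)
    then have "Mop x1 f = madd (msc (c ch) (Mop x1 ch)) (Mop x1 (\<lambda>x. \<Sum>ch\<in>S. c ch * ch x))"
      by (simp add: Mop_add[symmetric] Mop_scal[symmetric])
    with insert show ?case by (auto intro!: Bpoly.add Bpoly.scal Bpoly.gen_M)
  qed
qed

lemma Mop_translate_Bpoly: "Mop x1 f \<in> Bpoly x1 \<Longrightarrow> Mop x1 (\<lambda>x. f (x + x1)) \<in> Bpoly x1"
  unfolding Mop_translate by (intro Bpoly.mul Bpoly.gen_Vinv Bpoly.gen_V)

lemma derivation_on_eq_Bpoly: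
  assumes der1: "derivation_on (Bpoly x1) d1" and der2: "derivation_on (Bpoly x1) d2"
    and "d1 Vop = d2 Vop" "d1 Vinv = d2 Vinv"
    and "\<And>ch. character ch \<Longrightarrow> d1 (Mop x1 ch) = d2 (Mop x1 ch)"
    and "b \<in> Bpoly x1"
  shows "d1 b = d2 b"
proof -
  \<comment> \<open>The adjoint is carried along because the generators are not closed under it.\<close>
  have "d1 a = d2 a \<and> d1 (madj a) = d2 (madj a)" if "a \<in> Bpoly x1" for a
    using that
  proof (induction rule: Bpoly.induct)
    case (gen_M ch)
    then show ?case using assms(5) character_cnj madj_Mop by metis
  next
    case (add a b)
    then show ?case using der1 der2 Bpoly.adj madj_madd unfolding derivation_on_def by metis
  next
    case (scal a c)
    then show ?case using der1 der2 Bpoly.adj madj_msc unfolding derivation_on_def by metis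
  next
    case (mul a b)
    then show ?case using der1 der2 Bpoly.adj madj_mmul unfolding derivation_on_def by metis
  qed (use assms(3,4) Vinv_eq_madj_Vop madj_Vinv madj_madj in auto)
  with assms(6) show ?thesis by blast
qed

lemma derivation_on_Vinv:
  assumes der: "derivation_on (Bpoly x1) d" and dV: "d Vop = mzero"
  shows "d Vinv = mzero"
proof -
  let ?I = "mmul Vop Vinv"
  have I_Bpoly: "?I \<in> Bpoly x1" by (intro Bpoly.mul Bpoly.gen_V Bpoly.gen_Vinv)
  have unit: "mmul X ?I = X" "mmul ?I X = X" for X
    unfolding mmul_V_Vinv by (simp_all add: mmul_Mop_left mmul_Mop_right fun_eq_iff)
  have "d (mmul ?I ?I) = madd (mmul (d ?I) ?I) (mmul ?I (d ?I))"
    using der I_Bpoly unfolding derivation_on_def by blast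
  then have dI: "d ?I = mzero" by (simp add: unit madd_def mzero_def fun_eq_iff)
  have "d ?I = madd (mmul (d Vop) Vinv) (mmul Vop (d Vinv))"
    using der Bpoly.gen_V Bpoly.gen_Vinv unfolding derivation_on_def by blast
  then have "mmul Vop (d Vinv) = mzero"
    unfolding dI dV by (simp add: madd_def mzero_def mmul_def fun_eq_iff)
  then have "d Vinv (l + 1 - 1) k = 0" for l k
    by (metis mmul_V_left mzero_def)
  then show ?thesis by (simp add: mzero_def fun_eq_iff)
qed

lemma is_delta_partial_unique:
  assumes "is_delta_partial x1 D d1" "is_delta_partial x1 D d2" "b \<in> Bpoly x1"
  shows "d1 b = d2 b"
proof -
  have der: "derivation_on (Bpoly x1) d1" "derivation_on (Bpoly x1) d2"
    and V: "d1 Vop = mzero" "d2 Vop = mzero"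
    and M: "\<forall>f\<in>Fspan. d1 (Mop x1 f) = Mop x1 (D f)" "\<forall>f\<in>Fspan. d2 (Mop x1 f) = Mop x1 (D f)"
    using assms(1,2) unfolding is_delta_partial_def by auto
  show ?thesis
  proof (rule derivation_on_eq_Bpoly[OF der _ _ _ assms(3)])
    show "d1 Vop = d2 Vop" using V by simp
    show "d1 Vinv = d2 Vinv" using derivation_on_Vinv der V by metis
    show "d1 (Mop x1 ch) = d2 (Mop x1 ch)" if "character ch" for ch
      using M character_Fspan[OF that] by simp
  qed
qed

text \<open>The Schur multiplier by the differences of \<open>T\<close> is the commutator with the possibly
  unbounded diagonal operator \<open>diag(T)\<close>; \<open>[\<bbbL>, \<cdot>]\<close> is the case \<open>T l = l\<close>.\<close>
definition schur_mult :: "(int \<Rightarrow> complex) \<Rightarrow> mat \<Rightarrow> mat" where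
  "schur_mult T b = (\<lambda>l k. (T l - T k) * b l k)"

lemma Lcomm_eq_schur_mult: "Lcomm = schur_mult of_int"
  by (simp add: Lcomm_def schur_mult_def fun_eq_iff)

lemma banded_schur_mult: "banded N a \<Longrightarrow> banded N (schur_mult T a)"
  unfolding banded_def schur_mult_def by auto

lemma schur_mult_madd: "schur_mult T (madd a b) = madd (schur_mult T a) (schur_mult T b)"
  by (simp add: schur_mult_def madd_def fun_eq_iff algebra_simps)

lemma schur_mult_msc: "schur_mult T (msc c a) = msc c (schur_mult T a)"
  by (simp add: schur_mult_def msc_def fun_eq_iff algebra_simps)

lemma schur_mult_mmul:
  assumes "banded N a"
  shows "schur_mult T (mmul a b) = madd (mmul (schur_mult T a) b) (mmul a (schur_mult T b))"
proof (intro ext)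
  fix l k
  have "schur_mult T (mmul a b) l k = (\<Sum>j\<in>{l - int N..l + int N}. (T l - T k) * (a l j * b j k))"
    unfolding schur_mult_def mmul_banded_left[OF assms] by (simp add: sum_distrib_left)
  also have "\<dots> = (\<Sum>j\<in>{l - int N..l + int N}. schur_mult T a l j * b j k + a l j * schur_mult T b j k)"
    by (rule sum.cong) (auto simp: schur_mult_def algebra_simps)
  also have "\<dots> = madd (mmul (schur_mult T a) b) (mmul a (schur_mult T b)) l k"
    unfolding madd_def mmul_banded_left[OF assms] mmul_banded_left[OF banded_schur_mult[OF assms]]
    by (simp add: sum.distrib)
  finally show "schur_mult T (mmul a b) l k = madd (mmul (schur_mult T a) b) (mmul a (schur_mult T b)) l k" .
qed

lemma derivation_on_schur_mult: "derivation_on (Bpoly x1) (schur_mult T)"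
  unfolding derivation_on_def
  using banded_Bpoly schur_mult_mmul schur_mult_madd schur_mult_msc by blast

lemma Lcomm_Bpoly: "a \<in> Bpoly x1 \<Longrightarrow> Lcomm a \<in> Bpoly x1"
proof (induction rule: Bpoly.induct)
  case gen_V
  have "Lcomm Vop = Vop" by (auto simp: Lcomm_def Vop_def fun_eq_iff)
  then show ?case using Bpoly.gen_V by simp
next
  case gen_Vinv
  have "Lcomm Vinv = msc (-1) Vinv" by (auto simp: Lcomm_def Vinv_def msc_def fun_eq_iff)
  then show ?case by (simp add: Bpoly.scal Bpoly.gen_Vinv)
next
  case (gen_M ch)
  have "Lcomm (Mop x1 ch) = msc 0 (Mop x1 ch)" by (auto simp: Lcomm_def Mop_def msc_def fun_eq_iff)
  then show ?case by (simp add: Bpoly.scal Bpoly.gen_M gen_M)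
next
  case (add a b)
  then show ?case unfolding Lcomm_eq_schur_mult schur_mult_madd by (intro Bpoly.add)
next
  case (scal a c)
  then show ?case unfolding Lcomm_eq_schur_mult schur_mult_msc by (intro Bpoly.scal)
next
  case (mul a b)
  then obtain N where "banded N a" using banded_Bpoly by blast
  with mul show ?case unfolding Lcomm_eq_schur_mult schur_mult_mmul[OF \<open>banded N a\<close>]
    by (intro Bpoly.add Bpoly.mul) auto
next
  case (adj a)
  have "Lcomm (madj a) = msc (-1) (madj (Lcomm a))"
    by (auto simp: Lcomm_def madj_def msc_def fun_eq_iff algebra_simps)
  with adj show ?case by (simp add: Bpoly.adj Bpoly.scal)
qed

lemma derivation_on_diff:
  assumes "derivation_on (Bpoly x1) d1" "derivation_on (Bpoly x1) d2"
  shows "derivation_on (Bpoly x1) (\<lambda>b. msub (d1 b) (d2 b))"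
  unfolding derivation_on_def
proof (intro conjI ballI allI)
  fix a b assume a: "a \<in> Bpoly x1" and b: "b \<in> Bpoly x1"
  show "msub (d1 (madd a b)) (d2 (madd a b)) = madd (msub (d1 a) (d2 a)) (msub (d1 b) (d2 b))"
    using assms a b unfolding derivation_on_def by (simp add: msub_def madd_def fun_eq_iff)
  obtain N M where N: "banded N a" and M: "banded M b" using a b banded_Bpoly by blast
  have "mmul (msub X Y) b l k = mmul X b l k - mmul Y b l k"
       "mmul a (msub X Y) l k = mmul a X l k - mmul a Y l k" for X Y l k
    unfolding msub_def mmul_banded_right[OF M] mmul_banded_left[OF N]
    by (simp_all add: sum_subtractf algebra_simps)
  then show "msub (d1 (mmul a b)) (d2 (mmul a b))
      = madd (mmul (msub (d1 a) (d2 a)) b) (mmul a (msub (d1 b) (d2 b)))"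
    using assms a b unfolding derivation_on_def by (simp add: msub_def madd_def fun_eq_iff)
next
  fix c a assume "a \<in> Bpoly x1"
  then show "msub (d1 (msc c a)) (d2 (msc c a)) = msc c (msub (d1 a) (d2 a))"
    using assms unfolding derivation_on_def by (simp add: msub_def msc_def fun_eq_iff algebra_simps)
qed

lemma schur_mult_diff: "msub (schur_mult T1 b) (schur_mult T2 b) = schur_mult (\<lambda>l. T1 l - T2 l) b"
  by (simp add: schur_mult_def msub_def fun_eq_iff algebra_simps)

lemma mcomm_Mop_eq_schur_mult: "mcomm (Mop x1 h) b = schur_mult (\<lambda>l. h (zmul l x1)) b"
  by (simp add: mcomm_Mop schur_mult_def fun_eq_iff)

lemma schur_mult_bounded:
  assumes band: "banded N b" and C: "\<And>l k. cmod (b l k) \<le> C"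
    and step: "\<And>i. cmod (T (i + 1) - T i) \<le> e"
  shows "bounded_mat (schur_mult T b)" "mnorm (schur_mult T b) \<le> (2 * real N + 1) * (real N * e * C)"
proof -
  have e0: "0 \<le> e" using step[of 0] norm_ge_zero order_trans by blast
  have C0: "0 \<le> C" using C[of 0 0] norm_ge_zero order_trans by blast
  have "cmod (schur_mult T b l k) \<le> real N * e * C" for l k
  proof (cases "\<bar>l - k\<bar> \<le> int N")
    case True
    have "cmod (T l - T k) \<le> of_int \<bar>l - k\<bar> * e"
      by (rule norm_diff_le_steps[of T, OF step])
    also have "\<dots> \<le> real N * e"
      using True e0 by (intro mult_right_mono) auto
    finally show ?thesis
      unfolding schur_mult_def norm_mult using C[of l k] e0 by (intro mult_mono) auto
  next
    case False
    then show ?thesis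
      using band e0 C0 by (auto simp: banded_def schur_mult_def)
  qed
  then show "bounded_mat (schur_mult T b)" "mnorm (schur_mult T b) \<le> (2 * real N + 1) * (real N * e * C)"
    using banded_bounded[OF banded_schur_mult[OF band]] by blast+
qed

section \<open>Gauge invariance\<close>

lemma rotation_invariant_zero:
  fixes x :: complex and n :: int
  assumes "n \<noteq> 0" "\<And>\<theta>::real. exp (\<i> * of_real \<theta> * of_int n) * x = x"
  shows "x = 0"
proof -
  have "exp (\<i> * of_real (pi / of_int n) * of_int n) = exp (\<i> * of_real pi)"
    using assms(1) by (simp add: field_simps)
  also have "\<dots> = -1" by (simp add: exp_Euler)
  finally have "- x = x" using assms(2)[of "pi / of_int n"] by simp
  then show ?thesis by simp
qed

lemma rho_Vop: "rho \<theta> Vop = msc (exp (\<i> * of_real \<theta>)) Vop"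
  by (auto simp: rho_def Vop_def msc_def fun_eq_iff)

lemma rho_Mop: "rho \<theta> (Mop x1 f) = Mop x1 f"
  by (auto simp: rho_def Mop_def fun_eq_iff)

lemma invariant_der_Vop_entry:
  assumes "invariant_der x1 d" "derivation_on (Bpoly x1) d" "l \<noteq> k + 1"
  shows "d Vop l k = 0"
proof (rule rotation_invariant_zero[of "1 - (l - k)"])
  show "1 - (l - k) \<noteq> 0" using assms(3) by simp
  fix \<theta> :: real
  have "rho (- \<theta>) (d (rho \<theta> Vop)) = d Vop"
    using assms(1) Bpoly.gen_V unfolding invariant_der_def by blast
  moreover have "d (rho \<theta> Vop) = msc (exp (\<i> * of_real \<theta>)) (d Vop)"
    using assms(2) Bpoly.gen_V unfolding rho_Vop derivation_on_def by blast
  ultimately have "exp (\<i> * of_real (- \<theta>) * of_int (l - k)) * exp (\<i> * of_real \<theta>) * d Vop l k = d Vop l k"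
    by (metis (no_types, lifting) msc_def mult.assoc rho_def)
  moreover have "exp (\<i> * of_real (- \<theta>) * of_int (l - k)) * exp (\<i> * of_real \<theta>)
      = exp (\<i> * of_real \<theta> * of_int (1 - (l - k)))"
    by (simp add: algebra_simps flip: exp_add)
  ultimately show "exp (\<i> * of_real \<theta> * of_int (1 - (l - k))) * d Vop l k = d Vop l k"
    by simp
qed

lemma invariant_der_Mop_entry:
  assumes "invariant_der x1 d" "Mop x1 f \<in> Bpoly x1" "l \<noteq> k"
  shows "d (Mop x1 f) l k = 0"
proof (rule rotation_invariant_zero[of "k - l"])
  show "k - l \<noteq> 0" using assms(3) by simp
  fix \<theta> :: real
  have "rho (- \<theta>) (d (Mop x1 f)) l k = d (Mop x1 f) l k"
    using assms(1,2) rho_Mop unfolding invariant_der_def by metis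
  moreover have "exp (\<i> * of_real (- \<theta>) * of_int (l - k)) = exp (\<i> * of_real \<theta> * of_int (k - l))"
    by (simp add: algebra_simps)
  ultimately show "exp (\<i> * of_real \<theta> * of_int (k - l)) * d (Mop x1 f) l k = d (Mop x1 f) l k"
    by (simp add: rho_def)
qed


locale monothetic =
  fixes x1 :: "'g::{ab_group_add,t2_space}"
  assumes compact_UNIV: "compact (UNIV::'g set)"
    and continuous_add: "continuous_on UNIV (\<lambda>p::'g \<times> 'g. fst p + snd p)"
    and continuous_uminus: "continuous_on UNIV (\<lambda>x::'g. - x)"
    and dense_orbit: "closure (range (\<lambda>n::int. zmul n x1)) = UNIV"
begin

abbreviation xs :: "int \<Rightarrow> 'g" where "xs n \<equiv> zmul n x1"

lemma xs_add: "xs (a + b) = xs a + xs b"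
  by (rule zmul_add)

lemma continuous_on_translate: "continuous_on UNIV (\<lambda>x::'g. x + a)"
  using continuous_on_compose2[OF continuous_add continuous_on_Pair[OF continuous_on_id continuous_on_const]]
  by simp

lemma continuous_on_translate_comp:
  "continuous_on UNIV (h::'g \<Rightarrow> 'b::topological_space) \<Longrightarrow> continuous_on UNIV (\<lambda>x. h (x + a))"
  using continuous_on_compose2[OF _ continuous_on_translate, of UNIV h a] by simp

lemma continuous_bounded:
  fixes h :: "'g \<Rightarrow> 'b::real_normed_vector"
  assumes "continuous_on UNIV h"
  shows "\<exists>B. \<forall>x. norm (h x) \<le> B"
  using compact_imp_bounded[OF compact_continuous_image[OF assms compact_UNIV]]
  unfolding bounded_iff by auto

lemma closed_orbit_superset:
  assumes "closed C" "\<And>l. xs l \<in> C"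
  shows "x \<in> C"
  using closure_minimal[of "range xs" C] assms dense_orbit by auto

lemma continuous_eq_on_orbit:
  fixes h1 h2 :: "'g \<Rightarrow> 'b::t2_space"
  assumes "continuous_on UNIV h1" "continuous_on UNIV h2" "\<And>l. h1 (xs l) = h2 (xs l)"
  shows "h1 = h2"
  using closed_orbit_superset[OF closed_Collect_eq[OF assms(1,2)]] assms(3) by auto

lemma continuous_le_on_orbit:
  fixes h :: "'g \<Rightarrow> 'b::real_normed_vector"
  assumes "continuous_on UNIV h" "\<And>l. norm (h (xs l)) \<le> B"
  shows "norm (h x) \<le> B"
  using closed_orbit_superset[OF closed_Collect_le[OF continuous_on_norm[OF assms(1)] continuous_on_const]]
    assms(2) by auto

text \<open>The approximants are uniformly Cauchy on the dense orbit, hence on \<open>G\<close>.\<close>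
lemma uniform_limit_on_orbit:
  fixes H :: "nat \<Rightarrow> 'g \<Rightarrow> 'b::banach"
  assumes cont: "\<And>n. continuous_on UNIV (H n)"
    and lim: "\<And>e. 0 < e \<Longrightarrow> \<exists>J. \<forall>j\<ge>J. \<forall>l. norm (H j (xs l) - F l) \<le> e"
  shows "\<exists>h. continuous_on UNIV h \<and> (\<forall>l. F l = h (xs l))"
proof -
  have "uniformly_Cauchy_on UNIV H"
  proof (rule uniformly_Cauchy_onI)
    fix e :: real assume e: "0 < e"
    obtain J where J: "\<And>j l. j \<ge> J \<Longrightarrow> norm (H j (xs l) - F l) \<le> e / 3"
      using lim[of "e / 3"] e by auto
    have "dist (H p x) (H q x) < e" if "p \<ge> J" "q \<ge> J" for p q x
    proof -
      have "norm (H p (xs l) - H q (xs l)) \<le> e / 3 + e / 3" for l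
      proof (rule norm_diff_triangle_le[OF J[OF that(1)]])
        show "norm (F l - H q (xs l)) \<le> e / 3"
          using J[OF that(2), of l] by (simp add: norm_minus_commute)
      qed
      then have "norm (H p x - H q x) \<le> e / 3 + e / 3"
        using continuous_le_on_orbit[of "\<lambda>x. H p x - H q x"] continuous_on_diff[OF cont cont] by blast
      then show ?thesis using e by (simp add: dist_norm)
    qed
    then show "\<exists>M. \<forall>x\<in>UNIV. \<forall>p\<ge>M. \<forall>q\<ge>M. dist (H p x) (H q x) < e" by blast
  qed
  then obtain h where ul: "uniform_limit UNIV H h sequentially"
    using Cauchy_uniformly_convergent unfolding uniformly_convergent_on_def by blast
  have "continuous_on UNIV h"
    by (rule uniform_limit_theorem[OF _ ul]) (auto simp: cont)
  moreover have "F l = h (xs l)" for l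
  proof (rule LIMSEQ_unique)
    show "(\<lambda>n. H n (xs l)) \<longlonglongrightarrow> h (xs l)" by (rule tendsto_uniform_limitI[OF ul]) simp
    show "(\<lambda>n. H n (xs l)) \<longlonglongrightarrow> F l"
    proof (rule LIMSEQ_I)
      fix r :: real assume "0 < r"
      then obtain J where J: "\<And>j. j \<ge> J \<Longrightarrow> norm (H j (xs l) - F l) \<le> r / 2"
        using lim[of "r / 2"] by auto
      have "norm (H n (xs l) - F l) < r" if "n \<ge> J" for n
        using J[OF that] \<open>0 < r\<close> by linarith
      then show "\<exists>J. \<forall>n\<ge>J. norm (H n (xs l) - F l) < r" by blast
    qed
  qed
  ultimately show ?thesis by blast
qed

section \<open>Matrices with continuous diagonals\<close>

text \<open>The \<open>m\<close>-th diagonal of \<open>a\<close> is that of \<open>V\<^sup>m M\<^sub>h\<close> with \<open>h \<in> C(G)\<close>; this holds on \<open>B\<close>,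
  which is how \<open>B\<close> is the crossed product \<open>C(G) \<rtimes> \<int>\<close>.\<close>
definition continuous_diagonals :: "mat \<Rightarrow> bool" where
  "continuous_diagonals a \<longleftrightarrow> (\<forall>m. \<exists>h. continuous_on UNIV h \<and> (\<forall>l. a (l + m) l = h (xs l)))"

lemma continuous_diagonalsE:
  assumes "continuous_diagonals a"
  obtains H where "\<And>m. continuous_on UNIV (H m)" "\<And>m l. a (l + m) l = H m (xs l)"
  using assms unfolding continuous_diagonals_def by metis

lemma continuous_diagonals_Vop: "continuous_diagonals Vop"
  unfolding continuous_diagonals_def
  by (intro allI exI[of _ "\<lambda>_. if _ = 1 then 1 else 0"]) (auto simp: Vop_def)

lemma continuous_diagonals_Mop:
  assumes "continuous_on UNIV f"
  shows "continuous_diagonals (Mop x1 f)"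
  unfolding continuous_diagonals_def
proof
  fix m :: int
  show "\<exists>h. continuous_on UNIV h \<and> (\<forall>l. Mop x1 f (l + m) l = h (xs l))"
  proof (cases "m = 0")
    case True
    then show ?thesis using assms by (intro exI[of _ f]) (auto simp: Mop_def)
  next
    case False
    then show ?thesis by (intro exI[of _ "\<lambda>_. 0"]) (auto simp: Mop_def)
  qed
qed

lemma continuous_diagonals_madd:
  assumes "continuous_diagonals a" "continuous_diagonals b"
  shows "continuous_diagonals (madd a b)"
proof -
  obtain Ha Hb where "\<And>m. continuous_on UNIV (Ha m)" "\<And>m l. a (l + m) l = Ha m (xs l)"
    "\<And>m. continuous_on UNIV (Hb m)" "\<And>m l. b (l + m) l = Hb m (xs l)"
    using assms by (meson continuous_diagonalsE)
  then show ?thesis unfolding continuous_diagonals_def madd_def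
    by (intro allI exI[of _ "\<lambda>x. Ha _ x + Hb _ x"]) (auto intro!: continuous_intros)
qed

lemma continuous_diagonals_msc:
  assumes "continuous_diagonals a"
  shows "continuous_diagonals (msc c a)"
proof -
  obtain H where "\<And>m. continuous_on UNIV (H m)" "\<And>m l. a (l + m) l = H m (xs l)"
    using assms by (rule continuous_diagonalsE) blast
  then show ?thesis unfolding continuous_diagonals_def msc_def
    by (intro allI exI[of _ "\<lambda>x. c * H _ x"]) (auto intro!: continuous_intros)
qed

lemma continuous_diagonals_madj:
  assumes "continuous_diagonals a"
  shows "continuous_diagonals (madj a)"
  unfolding continuous_diagonals_def
proof
  fix m
  obtain H where H: "\<And>m. continuous_on UNIV (H m)" "\<And>m l. a (l + m) l = H m (xs l)"
    using assms by (rule continuous_diagonalsE) blast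
  have "madj a (l + m) l = cnj (H (-m) (xs l + xs m))" for l
    using H(2)[of "l + m" "-m"] by (simp add: madj_def xs_add)
  then show "\<exists>h. continuous_on UNIV h \<and> (\<forall>l. madj a (l + m) l = h (xs l))"
    by (intro exI[of _ "\<lambda>x. cnj (H (-m) (x + xs m))"]) (auto intro!: continuous_intros continuous_on_translate_comp H)
qed

lemma continuous_diagonals_mmul:
  assumes "banded N a" "continuous_diagonals a" "continuous_diagonals b"
  shows "continuous_diagonals (mmul a b)"
  unfolding continuous_diagonals_def
proof
  fix m
  obtain Ha Hb where Ha: "\<And>m. continuous_on UNIV (Ha m)" "\<And>m l. a (l + m) l = Ha m (xs l)"
    and Hb: "\<And>m. continuous_on UNIV (Hb m)" "\<And>m l. b (l + m) l = Hb m (xs l)"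
    using assms(2,3) by (meson continuous_diagonalsE)
  let ?h = "\<lambda>x. \<Sum>i\<in>{m - int N..m + int N}. Ha (m - i) (x + xs i) * Hb i x"
  have "mmul a b (l + m) l = (\<Sum>j\<in>{l + m - int N..l + m + int N}. a (l + m) j * b j l)" for l
    by (rule mmul_banded_left[OF assms(1)])
  also have "\<dots> l = (\<Sum>i\<in>{m - int N..m + int N}. a (l + m) (l + i) * b (l + i) l)" for l
    by (rule sum.reindex_bij_witness[of _ "\<lambda>i. l + i" "\<lambda>j. j - l"]) auto
  also have "\<dots> l = ?h (xs l)" for l
  proof (rule sum.cong[OF refl])
    fix i
    show "a (l + m) (l + i) * b (l + i) l = Ha (m - i) (xs l + xs i) * Hb i (xs l)"
      using Ha(2)[of "l + i" "m - i"] Hb(2)[of l i] by (simp add: xs_add)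
  qed
  finally show "\<exists>h. continuous_on UNIV h \<and> (\<forall>l. mmul a b (l + m) l = h (xs l))"
    by (intro exI[of _ ?h]) (auto intro!: continuous_intros continuous_on_translate_comp Ha Hb)
qed

lemma Balg0_banded_continuous_diagonals:
  "a \<in> Balg0 x1 \<Longrightarrow> (\<exists>N. banded N a) \<and> continuous_diagonals a"
proof (induction rule: Balg0.induct)
  case gen_V
  then show ?case using banded_Vop continuous_diagonals_Vop by blast
next
  case (gen_M f)
  then show ?case using banded_Mop continuous_diagonals_Mop by blast
next
  case (add a b)
  then obtain N M where "banded N a" "banded M b" by blast
  then have "banded (max N M) (madd a b)"
    by (intro banded_madd banded_mono[of _ _ "max N M"]) auto
  with add show ?case using continuous_diagonals_madd by blast
next
  case (scal a c)
  then show ?case using banded_msc continuous_diagonals_msc by blast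
next
  case (mul a b)
  then show ?case using banded_mmul continuous_diagonals_mmul by blast
next
  case (adj a)
  then show ?case using banded_madj continuous_diagonals_madj by blast
qed

lemma Bpoly_subset_Balg0: "a \<in> Bpoly x1 \<Longrightarrow> a \<in> Balg0 x1"
proof (induction rule: Bpoly.induct)
  case gen_Vinv
  show ?case unfolding Vinv_eq_madj_Vop by (intro Balg0.adj Balg0.gen_V)
qed (auto intro: Balg0.intros simp: character_def)

lemma Balg0_entries_bounded:
  assumes "a \<in> Balg0 x1"
  shows "\<exists>C. \<forall>l k. cmod (a l k) \<le> C"
proof -
  obtain N where band: "banded N a" and "continuous_diagonals a"
    using Balg0_banded_continuous_diagonals[OF assms] by blast
  then obtain H where "\<And>m. continuous_on UNIV (H m)" and H: "\<And>m l. a (l + m) l = H m (xs l)"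
    using continuous_diagonalsE by blast
  then have "\<forall>m. \<exists>B. \<forall>x. norm (H m x) \<le> B"
    using continuous_bounded by blast
  then obtain B where B: "\<And>m x. norm (H m x) \<le> B m"
    by metis
  define C where "C = (\<Sum>m\<in>{- int N..int N}. \<bar>B m\<bar>)"
  have "cmod (a l k) \<le> C" for l k
  proof (cases "\<bar>l - k\<bar> \<le> int N")
    case True
    have "cmod (a l k) = cmod (H (l - k) (xs k))" using H[of k "l - k"] by simp
    also have "\<dots> \<le> \<bar>B (l - k)\<bar>" using B[of "l - k" "xs k"] by simp
    also have "\<dots> \<le> C" unfolding C_def by (rule member_le_sum) (use True in auto)
    finally show ?thesis .
  next
    case False
    then show ?thesis using band by (auto simp: banded_def C_def intro: sum_nonneg)
  qed
  then show ?thesis by blast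
qed

lemma Balg0_bounded: "a \<in> Balg0 x1 \<Longrightarrow> bounded_mat a"
  using Balg0_entries_bounded Balg0_banded_continuous_diagonals banded_bounded(1) by metis

lemma Balg0_subset_Bstar: "a \<in> Balg0 x1 \<Longrightarrow> a \<in> Bstar x1"
  unfolding Bstar_def mtendsto_def
  by (rule CollectI, rule exI[of _ "\<lambda>_. a"]) (simp add: Balg0_bounded msub_self mnorm_mzero)

lemma Bstar_bounded: "a \<in> Bstar x1 \<Longrightarrow> bounded_mat a"
  unfolding Bstar_def mtendsto_def by blast

lemma Bstar_madd:
  assumes "a \<in> Bstar x1" "b \<in> Bstar x1"
  shows "madd a b \<in> Bstar x1"
proof -
  obtain y z where "\<forall>n. y n \<in> Balg0 x1" "mtendsto y a" "\<forall>n. z n \<in> Balg0 x1" "mtendsto z b"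
    using assms unfolding Bstar_def by blast
  then show ?thesis unfolding Bstar_def
    by (intro CollectI exI[of _ "\<lambda>n. madd (y n) (z n)"]) (auto intro: Balg0.add mtendsto_madd)
qed

lemma Bstar_msc:
  assumes "a \<in> Bstar x1"
  shows "msc c a \<in> Bstar x1"
proof -
  obtain y where "\<forall>n. y n \<in> Balg0 x1" "mtendsto y a"
    using assms unfolding Bstar_def by blast
  then show ?thesis unfolding Bstar_def
    by (intro CollectI exI[of _ "\<lambda>n. msc c (y n)"]) (auto intro: Balg0.scal mtendsto_msc)
qed

lemma Bstar_continuous_diagonals:
  assumes "a \<in> Bstar x1"
  shows "continuous_diagonals a"
  unfolding continuous_diagonals_def
proof
  fix m
  obtain y where y: "\<And>n. y n \<in> Balg0 x1" "mtendsto y a"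
    using assms unfolding Bstar_def by blast
  have "\<forall>n. \<exists>h. continuous_on UNIV h \<and> (\<forall>l. y n (l + m) l = h (xs l))"
    using Balg0_banded_continuous_diagonals[OF y(1)] unfolding continuous_diagonals_def by blast
  then obtain H where H: "\<And>n. continuous_on UNIV (H n)" "\<And>n l. y n (l + m) l = H n (xs l)"
    by metis
  show "\<exists>h. continuous_on UNIV h \<and> (\<forall>l. a (l + m) l = h (xs l))"
  proof (rule uniform_limit_on_orbit[OF H(1)])
    fix e :: real assume "0 < e"
    then show "\<exists>J. \<forall>j\<ge>J. \<forall>l. norm (H j (xs l) - a (l + m) l) \<le> e"
      using mtendsto_entries[OF y(2)] H(2) by metis
  qed
qed

end


section \<open>The cohomological equation over the rotation\<close>

context monothetic
begin

lemma uniformly_continuous_translate: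
  fixes g :: "'g \<Rightarrow> complex"
  assumes gc: "continuous_on UNIV g" and e: "0 < e"
  shows "\<exists>U. open U \<and> 0 \<in> U \<and> (\<forall>y. \<forall>u\<in>U. cmod (g (y + u) - g y) < e)"
proof -
  define F where "F = (\<lambda>p::'g \<times> 'g. g (fst p + snd p) - g (fst p))"
  define K where "K = snd ` {p. e \<le> cmod (F p)}"
  have "continuous_on UNIV F" unfolding F_def
    by (intro continuous_intros continuous_on_compose2[OF gc continuous_add])
       (auto intro: continuous_on_compose2[OF gc continuous_on_fst])
  then have "closed {p. e \<le> cmod (F p)}"
    by (intro closed_Collect_le continuous_intros)
  moreover have "compact (UNIV :: ('g \<times> 'g) set)"
    using compact_Times[OF compact_UNIV compact_UNIV] by simp
  ultimately have "compact {p. e \<le> cmod (F p)}"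
    using compact_Int_closed by fastforce
  then have "closed K" unfolding K_def
    by (intro compact_imp_closed compact_continuous_image continuous_intros)
  moreover have "0 \<notin> K" using e by (auto simp: K_def F_def)
  moreover have "cmod (g (y + u) - g y) < e" if "u \<notin> K" for y u
    using that unfolding K_def F_def by (metis (mono_tags, lifting) image_eqI mem_Collect_eq not_le snd_conv fst_conv)
  ultimately show ?thesis by (intro exI[of _ "- K"]) (auto simp: open_Compl)
qed

lemma orbit_finite_cover:
  assumes U: "open U" "0 \<in> U"
  shows "\<exists>M::nat. \<forall>y. \<exists>m. \<bar>m\<bar> \<le> int M \<and> y - xs m \<in> U"
proof -
  define Ob where "Ob = (\<lambda>m. (\<lambda>y. y + (- xs m)) -` U)"
  have opn: "open (Ob m)" for m unfolding Ob_def by (rule open_vimage[OF U(1) continuous_on_translate])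
  have cov: "UNIV \<subseteq> (\<Union>m. Ob m)"
  proof
    fix y :: 'g
    define W where "W = (\<lambda>z. - z + y) -` U"
    have "open W" unfolding W_def
      by (rule open_vimage[OF U(1) continuous_on_compose2[OF continuous_on_translate continuous_uminus]]) auto
    moreover have "y \<in> W" using U(2) by (simp add: W_def)
    ultimately have "W \<inter> range xs \<noteq> {}"
      using dense_orbit open_Int_closure_eq_empty[of W "range xs"] by auto
    then obtain m where "y - xs m \<in> U" unfolding W_def by (auto simp: algebra_simps)
    then show "y \<in> (\<Union>m. Ob m)" unfolding Ob_def by auto
  qed
  obtain C where C: "finite C" "UNIV \<subseteq> (\<Union>m\<in>C. Ob m)"
    by (rule compactE_image[OF compact_UNIV opn cov]) blast
  define M where "M = nat (Max (insert 0 (abs ` C)))"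
  have "\<bar>m\<bar> \<le> int M" if "m \<in> C" for m
    using C(1) that Max_ge[of "insert 0 (abs ` C)"] unfolding M_def by fastforce
  moreover have "\<forall>y. \<exists>m\<in>C. y - xs m \<in> U" using C(2) unfolding Ob_def by auto
  ultimately show ?thesis by blast
qed

definition birkhoff_sum :: "('g \<Rightarrow> complex) \<Rightarrow> nat \<Rightarrow> 'g \<Rightarrow> complex" where
  "birkhoff_sum g i x = (\<Sum>j<i. g (x + xs (int j)))"

definition birkhoff_avg :: "('g \<Rightarrow> complex) \<Rightarrow> nat \<Rightarrow> 'g \<Rightarrow> complex" where
  "birkhoff_avg g n x = birkhoff_sum g (Suc n) x / of_nat (Suc n)"

text \<open>The Cesaro mean of the Birkhoff sums, up to sign; by \<open>birkhoff_transfer_shift\<close>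
  its coboundary is \<open>g - birkhoff_avg g n\<close>.\<close>
definition birkhoff_transfer :: "('g \<Rightarrow> complex) \<Rightarrow> nat \<Rightarrow> 'g \<Rightarrow> complex" where
  "birkhoff_transfer g n x = - (\<Sum>i<Suc n. birkhoff_sum g i x) / of_nat (Suc n)"

lemma xs_Suc: "xs (1 + int j) = xs (int j) + x1"
  using zmul_succ[of "int j" x1] by (simp add: add.commute)

lemma birkhoff_sum_shift: "birkhoff_sum g i (x + x1) - birkhoff_sum g i x = g (x + xs (int i)) - g x"
proof (induction i)
  case (Suc i)
  have "birkhoff_sum g (Suc i) (x + x1) - birkhoff_sum g (Suc i) x
      = (birkhoff_sum g i (x + x1) - birkhoff_sum g i x) + g (x + x1 + xs (int i)) - g (x + xs (int i))"
    by (simp add: birkhoff_sum_def)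
  also have "x + x1 + xs (int i) = x + xs (int (Suc i))" by (simp add: xs_Suc algebra_simps)
  finally show ?case using Suc by simp
qed (simp add: birkhoff_sum_def)

lemma continuous_on_birkhoff_transfer:
  assumes "continuous_on UNIV g"
  shows "continuous_on UNIV (birkhoff_transfer g n)"
proof -
  have "continuous_on UNIV (birkhoff_sum g i)" for i
    unfolding birkhoff_sum_def by (intro continuous_intros continuous_on_translate_comp assms)
  moreover have "1 + of_nat n \<noteq> (0::complex)"
    by (metis add.commute of_nat_Suc of_nat_neq_0)
  ultimately show ?thesis
    unfolding birkhoff_transfer_def by (intro continuous_intros) auto
qed

lemma birkhoff_transfer_shift:
  "birkhoff_transfer g n (x + x1) - birkhoff_transfer g n x = g x - birkhoff_avg g n x"
proof -
  have "(\<Sum>i<Suc n. birkhoff_sum g i (x + x1)) - (\<Sum>i<Suc n. birkhoff_sum g i x)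
      = (\<Sum>i<Suc n. g (x + xs (int i)) - g x)"
    by (subst sum_subtractf[symmetric]) (simp only: birkhoff_sum_shift)
  also have "\<dots> = birkhoff_sum g (Suc n) x - of_nat (Suc n) * g x"
    by (simp add: sum_subtractf birkhoff_sum_def)
  finally have e: "(\<Sum>i<Suc n. birkhoff_sum g i (x + x1)) - (\<Sum>i<Suc n. birkhoff_sum g i x)
      = birkhoff_sum g (Suc n) x - of_nat (Suc n) * g x" .
  have "birkhoff_transfer g n (x + x1) - birkhoff_transfer g n x
      = - ((\<Sum>i<Suc n. birkhoff_sum g i (x + x1)) - (\<Sum>i<Suc n. birkhoff_sum g i x)) / of_nat (Suc n)"
    unfolding birkhoff_transfer_def diff_divide_distrib[symmetric] by (simp only: minus_diff_minus minus_diff_eq)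
  also have "\<dots> = g x - birkhoff_avg g n x" unfolding e birkhoff_avg_def
    by (simp add: field_simps del: of_nat_Suc)
  finally show ?thesis .
qed

lemma birkhoff_avg_bound:
  assumes "\<And>x. cmod (g x) \<le> B"
  shows "cmod (birkhoff_avg g n x) \<le> B"
proof -
  have "cmod (birkhoff_sum g (Suc n) x) \<le> (\<Sum>j<Suc n. B)"
    unfolding birkhoff_sum_def by (rule order_trans[OF norm_sum sum_mono]) (rule assms)
  then show ?thesis unfolding birkhoff_avg_def by (simp add: norm_divide field_simps del: of_nat_Suc)
qed

lemma birkhoff_avg_shift:
  assumes B: "\<And>x. cmod (g x) \<le> B"
  shows "cmod (birkhoff_avg g n (x + x1) - birkhoff_avg g n x) \<le> 2 * B / of_nat (Suc n)"
proof -
  have "birkhoff_avg g n (x + x1) - birkhoff_avg g n x = (g (x + xs (int (Suc n))) - g x) / of_nat (Suc n)"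
    unfolding birkhoff_avg_def diff_divide_distrib[symmetric] birkhoff_sum_shift ..
  moreover have "cmod (g (x + xs (int (Suc n))) - g x) \<le> 2 * B"
    using norm_triangle_ineq4[of "g (x + xs (int (Suc n)))" "g x"] B[of x] B[of "x + xs (int (Suc n))"]
    by linarith
  ultimately show ?thesis by (simp add: norm_divide divide_right_mono del: of_nat_Suc)
qed

text \<open>The averages are almost \<open>x\<^sub>1\<close>-invariant, so they vary little along bounded
  stretches of the orbit; uniform continuity and the finite cover propagate this to all of \<open>G\<close>.\<close>
lemma birkhoff_avg_oscillation:
  fixes g :: "'g \<Rightarrow> complex"
  assumes gc: "continuous_on UNIV g" and B: "\<And>x. cmod (g x) \<le> B" and e: "0 < e"
  shows "\<exists>N. \<forall>n\<ge>N. \<forall>y. cmod (birkhoff_avg g n y - birkhoff_avg g n 0) \<le> e"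
proof -
  have B0: "0 \<le> B" using B[of 0] norm_ge_zero order_trans by blast
  obtain U where U: "open U" "0 \<in> U" "\<And>y u. u \<in> U \<Longrightarrow> cmod (g (y + u) - g y) < e / 2"
    using uniformly_continuous_translate[OF gc, of "e/2"] e by auto
  obtain M where M: "\<And>y. \<exists>m. \<bar>m\<bar> \<le> int M \<and> y - xs m \<in> U" using orbit_finite_cover[OF U(1,2)] by blast
  obtain N :: nat where N: "4 * B * real M / e < real N" using reals_Archimedean2 by blast
  have "cmod (birkhoff_avg g n y - birkhoff_avg g n 0) \<le> e" if n: "n \<ge> N" for n y
  proof -
    obtain m where m: "\<bar>m\<bar> \<le> int M" "y - xs m \<in> U" using M by blast
    define u where "u = y - xs m"
    have avg_diff: "birkhoff_avg g n y - birkhoff_avg g n (xs m)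
        = (\<Sum>j<Suc n. g ((xs m + xs (int j)) + u) - g (xs m + xs (int j))) / of_nat (Suc n)"
      unfolding birkhoff_avg_def birkhoff_sum_def u_def
      by (simp add: diff_divide_distrib sum_subtractf algebra_simps del: of_nat_Suc)
    have "cmod (g ((xs m + xs (int j)) + u) - g (xs m + xs (int j))) \<le> e / 2" for j
      using U(3)[of u "xs m + xs (int j)"] m(2) u_def by simp
    then have "cmod (\<Sum>j<Suc n. g ((xs m + xs (int j)) + u) - g (xs m + xs (int j))) \<le> (\<Sum>j<Suc n. e / 2)"
      by (intro order_trans[OF norm_sum sum_mono])
    then have near: "cmod (birkhoff_avg g n y - birkhoff_avg g n (xs m)) \<le> e / 2"
      unfolding avg_diff by (simp add: norm_divide field_simps del: of_nat_Suc)
    have "cmod (birkhoff_avg g n (xs (i + 1)) - birkhoff_avg g n (xs i)) \<le> 2 * B / of_nat (Suc n)" for i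
      unfolding zmul_succ by (rule birkhoff_avg_shift[OF B])
    then have "cmod (birkhoff_avg g n (xs m) - birkhoff_avg g n (xs 0)) \<le> of_int \<bar>m - 0\<bar> * (2 * B / of_nat (Suc n))"
      by (rule norm_diff_le_steps)
    also have "\<dots> \<le> real M * (2 * B / of_nat (Suc n))"
      using m(1) B0 by (intro mult_right_mono) auto
    also have "\<dots> \<le> e / 2"
    proof -
      have "4 * B * real M / e < real (Suc n)" using N n by simp
      then have "4 * B * real M < e * real (Suc n)" using e by (simp add: field_simps)
      then show ?thesis by (simp add: field_simps del: of_nat_Suc)
    qed
    finally have far: "cmod (birkhoff_avg g n (xs m) - birkhoff_avg g n 0) \<le> e / 2" by simp
    show ?thesis using norm_diff_triangle_le[OF near far] by simp
  qed
  then show ?thesis by blast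
qed

text \<open>\<open>c\<close> is a limit point of the averages at \<open>0\<close>, and \<open>h\<close> is a \<open>birkhoff_transfer\<close>.\<close>
lemma approx_coboundary:
  fixes g :: "'g \<Rightarrow> complex"
  assumes gc: "continuous_on UNIV g"
  shows "\<exists>c. \<forall>e>0. \<exists>h. continuous_on UNIV h \<and> (\<forall>x. cmod (h (x + x1) - h x - (g x - c)) \<le> e)"
proof -
  obtain B where B: "\<And>x. cmod (g x) \<le> B" using continuous_bounded[OF gc] by blast
  have "bounded (range (\<lambda>n. birkhoff_avg g n 0))"
    unfolding bounded_iff using birkhoff_avg_bound[where g = g, OF B] by blast
  then obtain c r where r: "strict_mono r" and lim: "((\<lambda>n. birkhoff_avg g n 0) \<circ> r) \<longlonglongrightarrow> c"
    using bounded_imp_convergent_subsequence by blast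
  have "\<exists>h. continuous_on UNIV h \<and> (\<forall>x. cmod (h (x + x1) - h x - (g x - c)) \<le> e)" if e: "0 < e" for e
  proof -
    obtain N where N: "\<And>n y. n \<ge> N \<Longrightarrow> cmod (birkhoff_avg g n y - birkhoff_avg g n 0) \<le> e / 2"
      using birkhoff_avg_oscillation[OF gc B, of "e/2"] e by auto
    obtain K where K: "\<And>k. k \<ge> K \<Longrightarrow> norm (((\<lambda>n. birkhoff_avg g n 0) \<circ> r) k - c) < e / 2"
      using LIMSEQ_D[OF lim, of "e/2"] e by auto
    define n where "n = r (max N K)"
    have nN: "n \<ge> N" unfolding n_def using seq_suble[OF r, of "max N K"] by simp
    have nK: "cmod (birkhoff_avg g n 0 - c) < e / 2" unfolding n_def using K[of "max N K"] by simp
    have "cmod (birkhoff_transfer g n (x + x1) - birkhoff_transfer g n x - (g x - c)) \<le> e" for x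
    proof -
      have "birkhoff_transfer g n (x + x1) - birkhoff_transfer g n x - (g x - c)
          = (birkhoff_avg g n 0 - birkhoff_avg g n x) - (birkhoff_avg g n 0 - c)"
        using birkhoff_transfer_shift[of g n x] by simp
      also have "cmod \<dots> \<le> e / 2 + e / 2"
        using norm_triangle_ineq4 N[OF nN, of x] nK
        by (smt (verit, best) norm_minus_commute)
      finally show ?thesis by simp
    qed
    then show ?thesis using continuous_on_birkhoff_transfer[OF gc] by blast
  qed
  then show ?thesis by blast
qed

end


section \<open>Existence of the decomposition\<close>

locale invariant_derivation = monothetic x1 for x1 :: "'g::{ab_group_add,t2_space}" +
  fixes \<delta> :: "mat \<Rightarrow> mat"
  assumes derivation: "derivation_on (Bpoly x1) \<delta>"
    and range_Bstar: "\<delta> ` Bpoly x1 \<subseteq> Bstar x1"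
    and invariant: "invariant_der x1 \<delta>"
begin

lemma derivation_mmul:
  "a \<in> Bpoly x1 \<Longrightarrow> b \<in> Bpoly x1 \<Longrightarrow> \<delta> (mmul a b) = madd (mmul (\<delta> a) b) (mmul a (\<delta> b))"
  using derivation unfolding derivation_on_def by blast

lemma continuous_diagonals_delta: "b \<in> Bpoly x1 \<Longrightarrow> continuous_diagonals (\<delta> b)"
  using range_Bstar Bstar_continuous_diagonals by blast

text \<open>By invariance, \<open>\<delta>(V)\<close> lives on the subdiagonal, where it is \<open>V M\<^sub>g\<close> for this \<open>g\<close>.\<close>
definition subdiag_V :: "'g \<Rightarrow> complex" where
  "subdiag_V = (SOME h. continuous_on UNIV h \<and> (\<forall>l. \<delta> Vop (l + 1) l = h (xs l)))"

lemma subdiag_V: "continuous_on UNIV subdiag_V" "\<And>l. \<delta> Vop (l + 1) l = subdiag_V (xs l)"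
proof -
  have "\<exists>h. continuous_on UNIV h \<and> (\<forall>l. \<delta> Vop (l + 1) l = h (xs l))"
    using continuous_diagonals_delta[OF Bpoly.gen_V] unfolding continuous_diagonals_def by blast
  then have "continuous_on UNIV subdiag_V \<and> (\<forall>l. \<delta> Vop (l + 1) l = subdiag_V (xs l))"
    unfolding subdiag_V_def by (rule someI_ex)
  then show "continuous_on UNIV subdiag_V" "\<And>l. \<delta> Vop (l + 1) l = subdiag_V (xs l)" by auto
qed

lemma delta_Vop: "\<delta> Vop l k = (if l = k + 1 then subdiag_V (xs k) else 0)"
  using invariant_der_Vop_entry[OF invariant derivation] subdiag_V(2) by auto

text \<open>By invariance, \<open>\<delta>(M\<^sub>f)\<close> is diagonal; its diagonal defines \<open>\<partial>f\<close>.\<close>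
definition diag_der :: "('g \<Rightarrow> complex) \<Rightarrow> 'g \<Rightarrow> complex" where
  "diag_der f = (SOME h. continuous_on UNIV h \<and> (\<forall>l. \<delta> (Mop x1 f) l l = h (xs l)))"

lemma diag_der:
  assumes "Mop x1 f \<in> Bpoly x1"
  shows "continuous_on UNIV (diag_der f)" "\<And>l. \<delta> (Mop x1 f) l l = diag_der f (xs l)"
proof -
  have "\<exists>h. continuous_on UNIV h \<and> (\<forall>l. \<delta> (Mop x1 f) (l + 0) l = h (xs l))"
    using continuous_diagonals_delta[OF assms] unfolding continuous_diagonals_def by blast
  then have "\<exists>h. continuous_on UNIV h \<and> (\<forall>l. \<delta> (Mop x1 f) l l = h (xs l))"
    by simp
  then have "continuous_on UNIV (diag_der f) \<and> (\<forall>l. \<delta> (Mop x1 f) l l = diag_der f (xs l))"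
    unfolding diag_der_def by (rule someI_ex)
  then show "continuous_on UNIV (diag_der f)" "\<And>l. \<delta> (Mop x1 f) l l = diag_der f (xs l)" by auto
qed

lemma delta_Mop:
  assumes "Mop x1 f \<in> Bpoly x1"
  shows "\<delta> (Mop x1 f) = Mop x1 (diag_der f)"
  using invariant_der_Mop_entry[OF invariant assms] diag_der(2)[OF assms]
  by (auto simp: Mop_def fun_eq_iff)

lemma diag_der_translate:
  assumes f: "f \<in> Fspan"
  shows "(\<lambda>x. diag_der f (x + x1)) = diag_der (\<lambda>x. f (x + x1))"
proof (rule continuous_eq_on_orbit)
  have Mf: "Mop x1 f \<in> Bpoly x1" by (rule Mop_Fspan_Bpoly[OF f])
  have Mf': "Mop x1 (\<lambda>x. f (x + x1)) \<in> Bpoly x1" by (rule Mop_translate_Bpoly[OF Mf])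
  show "continuous_on UNIV (\<lambda>x. diag_der f (x + x1))"
    by (rule continuous_on_translate_comp[OF diag_der(1)[OF Mf]])
  show "continuous_on UNIV (diag_der (\<lambda>x. f (x + x1)))" by (rule diag_der(1)[OF Mf'])
  fix l
  \<comment> \<open>the \<open>(l+1, l)\<close> entry of \<open>\<delta>\<close> applied to \<open>M\<^sub>f V = V M\<^sub>f\<^sub>\<circ>\<^sub>\<phi>\<close>\<close>
  have "\<delta> (mmul (Mop x1 f) Vop) = \<delta> (mmul Vop (Mop x1 (\<lambda>x. f (x + x1))))"
    by (simp add: Mop_V_commute)
  then have "madd (mmul (\<delta> (Mop x1 f)) Vop) (mmul (Mop x1 f) (\<delta> Vop)) (l + 1) l
      = madd (mmul (\<delta> Vop) (Mop x1 (\<lambda>x. f (x + x1)))) (mmul Vop (\<delta> (Mop x1 (\<lambda>x. f (x + x1))))) (l + 1) l"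
    by (simp add: derivation_mmul[OF Mf Bpoly.gen_V] derivation_mmul[OF Bpoly.gen_V Mf'])
  then have "\<delta> (Mop x1 f) (l + 1) (l + 1) + f (xs (l + 1)) * \<delta> Vop (l + 1) l
      = \<delta> Vop (l + 1) l * f (xs l + x1) + \<delta> (Mop x1 (\<lambda>x. f (x + x1))) l l"
    by (simp add: madd_def mmul_V_right mmul_V_left mmul_Mop_left mmul_Mop_right)
  then have "diag_der f (xs (l + 1)) + f (xs (l + 1)) * \<delta> Vop (l + 1) l
      = \<delta> Vop (l + 1) l * f (xs l + x1) + diag_der (\<lambda>x. f (x + x1)) (xs l)"
    by (simp only: diag_der(2)[OF Mf] diag_der(2)[OF Mf'])
  then show "diag_der f (xs l + x1) = diag_der (\<lambda>x. f (x + x1)) (xs l)"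
    by (simp add: zmul_succ mult.commute)
qed

lemma phi_inv_derivation_diag_der: "phi_inv_derivation x1 diag_der"
  unfolding phi_inv_derivation_def
proof (intro conjI ballI allI)
  fix f g :: "'g \<Rightarrow> complex" and c assume f: "f \<in> Fspan" and g: "g \<in> Fspan"
  have Mf: "Mop x1 f \<in> Bpoly x1" and Mg: "Mop x1 g \<in> Bpoly x1"
    using Mop_Fspan_Bpoly f g by blast+
  have "Mop x1 (\<lambda>x. f x + g x) \<in> Bpoly x1" unfolding Mop_add by (rule Bpoly.add[OF Mf Mg])
  moreover have "Mop x1 (\<lambda>x. f x * g x) \<in> Bpoly x1" unfolding Mop_mul by (rule Bpoly.mul[OF Mf Mg])
  moreover have "Mop x1 (\<lambda>x. c * f x) \<in> Bpoly x1" unfolding Mop_scal by (rule Bpoly.scal[OF Mf])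
  ultimately have Mfg: "Mop x1 (\<lambda>x. f x + g x) \<in> Bpoly x1" "Mop x1 (\<lambda>x. f x * g x) \<in> Bpoly x1"
    "Mop x1 (\<lambda>x. c * f x) \<in> Bpoly x1" by blast+
  have der: "\<delta> (madd (Mop x1 f) (Mop x1 g)) = madd (\<delta> (Mop x1 f)) (\<delta> (Mop x1 g))"
    "\<delta> (msc c (Mop x1 f)) = msc c (\<delta> (Mop x1 f))"
    using derivation Mf Mg unfolding derivation_on_def by blast+
  note cont = diag_der(1)[OF Mf] diag_der(1)[OF Mg] continuous_on_Fspan[OF f] continuous_on_Fspan[OF g]
  show "continuous_on UNIV (diag_der f)" by (rule diag_der(1)[OF Mf])
  show "(\<lambda>x. diag_der f (x + x1)) = diag_der (\<lambda>x. f (x + x1))" by (rule diag_der_translate[OF f])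
  show "diag_der (\<lambda>x. f x + g x) = (\<lambda>x. diag_der f x + diag_der g x)"
  proof (rule continuous_eq_on_orbit)
    fix l show "diag_der (\<lambda>x. f x + g x) (xs l) = diag_der f (xs l) + diag_der g (xs l)"
      unfolding diag_der(2)[OF Mfg(1), symmetric] diag_der(2)[OF Mf, symmetric] diag_der(2)[OF Mg, symmetric]
        Mop_add der(1) by (simp add: madd_def)
  qed (use cont diag_der(1)[OF Mfg(1)] in \<open>auto intro!: continuous_intros\<close>)
  show "diag_der (\<lambda>x. f x * g x) = (\<lambda>x. diag_der f x * g x + f x * diag_der g x)"
  proof (rule continuous_eq_on_orbit)
    fix l show "diag_der (\<lambda>x. f x * g x) (xs l) = diag_der f (xs l) * g (xs l) + f (xs l) * diag_der g (xs l)"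
      unfolding diag_der(2)[OF Mfg(2), symmetric] diag_der(2)[OF Mf, symmetric] diag_der(2)[OF Mg, symmetric]
        Mop_mul derivation_mmul[OF Mf Mg] by (simp add: madd_def mmul_Mop_left mmul_Mop_right)
  qed (use cont diag_der(1)[OF Mfg(2)] in \<open>auto intro!: continuous_intros\<close>)
  show "diag_der (\<lambda>x. c * f x) = (\<lambda>x. c * diag_der f x)"
  proof (rule continuous_eq_on_orbit)
    fix l show "diag_der (\<lambda>x. c * f x) (xs l) = c * diag_der f (xs l)"
      unfolding diag_der(2)[OF Mfg(3), symmetric] diag_der(2)[OF Mf, symmetric] Mop_scal der(2)
      by (simp add: msc_def)
  qed (use cont diag_der(1)[OF Mfg(3)] in \<open>auto intro!: continuous_intros\<close>)
qed

definition shift_const :: complex where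
  "shift_const = (SOME c. \<forall>e>0. \<exists>h. continuous_on UNIV h \<and>
      (\<forall>x. cmod (h (x + x1) - h x - (subdiag_V x - c)) \<le> e))"

definition cobound_seq :: "nat \<Rightarrow> 'g \<Rightarrow> complex" where
  "cobound_seq j = (SOME h. continuous_on UNIV h \<and>
      (\<forall>x. cmod (h (x + x1) - h x - (subdiag_V x - shift_const)) \<le> inverse (real (Suc j))))"

lemma cobound_seq:
  "continuous_on UNIV (cobound_seq j)"
  "\<And>x. cmod (cobound_seq j (x + x1) - cobound_seq j x - (subdiag_V x - shift_const)) \<le> inverse (real (Suc j))"
proof -
  have "\<forall>e>0. \<exists>h. continuous_on UNIV h \<and> (\<forall>x. cmod (h (x + x1) - h x - (subdiag_V x - shift_const)) \<le> e)"
    unfolding shift_const_def by (rule someI_ex[OF approx_coboundary[OF subdiag_V(1)]])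
  then have "\<exists>h. continuous_on UNIV h \<and>
      (\<forall>x. cmod (h (x + x1) - h x - (subdiag_V x - shift_const)) \<le> inverse (real (Suc j)))"
    by simp
  then have "continuous_on UNIV (cobound_seq j) \<and>
      (\<forall>x. cmod (cobound_seq j (x + x1) - cobound_seq j x - (subdiag_V x - shift_const)) \<le> inverse (real (Suc j)))"
    unfolding cobound_seq_def by (rule someI_ex)
  then show "continuous_on UNIV (cobound_seq j)"
    "\<And>x. cmod (cobound_seq j (x + x1) - cobound_seq j x - (subdiag_V x - shift_const)) \<le> inverse (real (Suc j))"
    by auto
qed

text \<open>\<open>T(l+1) - T(l) = g(x\<^sub>l) - c\<^sub>0\<close>: the Schur multiplier by \<open>T\<close> is the formal commutator
  with \<open>M\<^sub>h\<close> for a solution \<open>h\<close> of the (unsolvable) equation \<open>h \<circ> \<phi> - h = g - c\<^sub>0\<close>.\<close>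
definition gauge :: "int \<Rightarrow> complex" where
  "gauge = potential (\<lambda>i. subdiag_V (xs i) - shift_const)"

definition inner_part :: "mat \<Rightarrow> mat" where
  "inner_part = schur_mult gauge"

lemma gauge_step: "gauge (i + 1) - gauge i = subdiag_V (xs i) - shift_const"
  unfolding gauge_def by (rule potential_step)

lemma mcomm_cobound_seq_tendsto:
  assumes b: "b \<in> Bpoly x1"
  shows "mtendsto (\<lambda>j. mcomm (Mop x1 (cobound_seq j)) b) (inner_part b)"
proof -
  obtain N where N: "banded N b" using banded_Bpoly[OF b] by blast
  obtain C where C: "\<And>l k. cmod (b l k) \<le> C"
    using Balg0_entries_bounded[OF Bpoly_subset_Balg0[OF b]] by blast
  obtain B where "\<And>x. cmod (subdiag_V x) \<le> B" using continuous_bounded[OF subdiag_V(1)] by blast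
  then have "cmod (gauge (i + 1) - gauge i) \<le> B + cmod shift_const" for i
    unfolding gauge_step by (meson add_right_mono norm_triangle_ineq4 order_trans)
  then have bounded: "bounded_mat (inner_part b)"
    unfolding inner_part_def by (rule schur_mult_bounded[OF N C])
  define E where "E = (\<lambda>j i. cobound_seq j (xs i) - gauge i)"
  have "E j (i + 1) - E j i = cobound_seq j (xs i + x1) - cobound_seq j (xs i) - (subdiag_V (xs i) - shift_const)"
    for j i
    using gauge_step[of i] unfolding E_def zmul_succ by (simp add: algebra_simps)
  then have "cmod (E j (i + 1) - E j i) \<le> inverse (real (Suc j))" for j i
    using cobound_seq(2)[of j "xs i"] by simp
  then have E: "mnorm (schur_mult (E j) b) \<le> (2 * real N + 1) * (real N * inverse (real (Suc j)) * C)"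
    "bounded_mat (schur_mult (E j) b)" for j
    using schur_mult_bounded[OF N C] by blast+
  have eq: "msub (mcomm (Mop x1 (cobound_seq j)) b) (inner_part b) = schur_mult (E j) b" for j
    unfolding mcomm_Mop_eq_schur_mult inner_part_def schur_mult_diff E_def ..
  have "(\<lambda>j. (2 * real N + 1) * (real N * inverse (real (Suc j)) * C)) \<longlonglongrightarrow> 0"
    by (intro tendsto_mult_right_zero tendsto_mult_left_zero LIMSEQ_inverse_real_of_nat)
  moreover have "bounded_mat (mcomm (Mop x1 (cobound_seq j)) b)" for j
  proof -
    have "mcomm (Mop x1 (cobound_seq j)) b = madd (schur_mult (E j) b) (inner_part b)"
      unfolding eq[symmetric] by (simp add: msub_def madd_def)
    then show ?thesis using bounded_madd[OF E(2) bounded] by simp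
  qed
  ultimately show ?thesis
    using bounded E eq
    by (intro mtendstoI[where r = "\<lambda>j. (2 * real N + 1) * (real N * inverse (real (Suc j)) * C)"]) auto
qed

lemma inner_part_approx_inner: "approx_inner x1 inner_part"
proof -
  have Balg0: "mcomm (Mop x1 (cobound_seq j)) b \<in> Balg0 x1" if "b \<in> Bpoly x1" for j b
    unfolding mcomm_def msub_eq
    using that by (intro Balg0.add Balg0.scal Balg0.mul Balg0.gen_M cobound_seq(1) Bpoly_subset_Balg0)
  have "inner_part b \<in> Bstar x1" if "b \<in> Bpoly x1" for b
  proof -
    have "\<forall>j. mcomm (Mop x1 (cobound_seq j)) b \<in> Balg0 x1" using Balg0[OF that] by blast
    then show ?thesis unfolding Bstar_def using mcomm_cobound_seq_tendsto[OF that]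
      by (intro CollectI exI[of _ "\<lambda>j. mcomm (Mop x1 (cobound_seq j)) b"] conjI)
  qed
  then have "inner_part ` Bpoly x1 \<subseteq> Bstar x1" by blast
  moreover have "Mop x1 (cobound_seq j) \<in> Bstar x1" for j
    by (intro Balg0_subset_Bstar Balg0.gen_M cobound_seq(1))
  ultimately show ?thesis
    unfolding approx_inner_def using mcomm_cobound_seq_tendsto
    by (intro conjI exI[of _ "\<lambda>j. Mop x1 (cobound_seq j)"]) auto
qed

definition partial_part :: "mat \<Rightarrow> mat" where
  "partial_part b = msub (\<delta> b) (schur_mult (\<lambda>l. shift_const * of_int l + gauge l) b)"

lemma delta_decomposition:
  "\<delta> b = madd (madd (msc shift_const (Lcomm b)) (partial_part b)) (inner_part b)"
  by (simp add: partial_part_def inner_part_def schur_mult_def Lcomm_def madd_def msc_def msub_def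
      fun_eq_iff algebra_simps)

lemma partial_part_Bstar:
  assumes b: "b \<in> Bpoly x1"
  shows "partial_part b \<in> Bstar x1"
proof -
  have "partial_part b = madd (\<delta> b) (msc (-1) (madd (msc shift_const (Lcomm b)) (inner_part b)))"
    by (simp add: partial_part_def inner_part_def schur_mult_def Lcomm_def madd_def msc_def msub_def
        fun_eq_iff algebra_simps)
  moreover have "Lcomm b \<in> Bstar x1"
    using Lcomm_Bpoly[OF b] Bpoly_subset_Balg0 Balg0_subset_Bstar by blast
  moreover have "inner_part b \<in> Bstar x1" "\<delta> b \<in> Bstar x1"
    using inner_part_approx_inner range_Bstar b unfolding approx_inner_def by blast+
  ultimately show ?thesis by (simp add: Bstar_madd Bstar_msc)
qed

lemma is_delta_partial_partial_part: "is_delta_partial x1 diag_der partial_part"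
  unfolding is_delta_partial_def
proof (intro conjI ballI subsetI)
  show "derivation_on (Bpoly x1) partial_part"
    unfolding partial_part_def[abs_def] by (intro derivation_on_diff derivation derivation_on_schur_mult)
  show "x \<in> Bstar x1" if "x \<in> partial_part ` Bpoly x1" for x
    using that partial_part_Bstar by blast
  show "partial_part Vop = mzero"
  proof (intro ext)
    fix l k
    have "gauge (k + 1) = gauge k + subdiag_V (xs k) - shift_const"
      using gauge_step[of k] by (simp add: algebra_simps)
    then show "partial_part Vop l k = mzero l k"
      unfolding partial_part_def msub_def schur_mult_def delta_Vop mzero_def
      by (auto simp: Vop_def algebra_simps)
  qed
  show "partial_part (Mop x1 f) = Mop x1 (diag_der f)" if "f \<in> Fspan" for f
    using delta_Mop[OF Mop_Fspan_Bpoly[OF that]]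
    by (auto simp: partial_part_def schur_mult_def Mop_def msub_def fun_eq_iff)
qed

lemma decomposition_exists: "decomposition x1 \<delta> shift_const diag_der inner_part"
  unfolding decomposition_def
  using phi_inv_derivation_diag_der inner_part_approx_inner is_delta_partial_partial_part
    is_delta_partial_unique delta_decomposition
  by blast

end


section \<open>Uniqueness of the decomposition\<close>

context monothetic
begin

lemma approx_inner_Mop_diag:
  assumes ai: "approx_inner x1 dt" and Mf: "Mop x1 f \<in> Bpoly x1"
  shows "dt (Mop x1 f) l l = 0"
proof -
  obtain y where y: "mtendsto (\<lambda>j. mcomm (y j) (Mop x1 f)) (dt (Mop x1 f))"
    using ai Mf unfolding approx_inner_def by blast
  have "cmod (dt (Mop x1 f) l l) \<le> e" if e: "0 < e" for e
  proof -
    obtain J where "\<forall>j\<ge>J. \<forall>l k. cmod (mcomm (y j) (Mop x1 f) l k - dt (Mop x1 f) l k) \<le> e"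
      using mtendsto_entries[OF y e] by blast
    then have "cmod (mcomm (y J) (Mop x1 f) l l - dt (Mop x1 f) l l) \<le> e" by blast
    moreover have "mcomm (y J) (Mop x1 f) l l = 0"
      by (simp add: mcomm_def msub_def mmul_Mop_left mmul_Mop_right)
    ultimately show ?thesis by simp
  qed
  then show ?thesis using field_le_epsilon[of "cmod (dt (Mop x1 f) l l)" 0] by simp
qed

text \<open>The subdiagonal of \<open>[y, V]\<close> is \<open>y\<^sub>l\<^sub>+\<^sub>1\<^sub>,\<^sub>l\<^sub>+\<^sub>1 - y\<^sub>l\<^sub>l\<close>, which telescopes to a bounded
  quantity, so two approximately inner maps cannot differ on it by a nonzero constant
  (which would telescope to \<open>n c\<close>).\<close>
lemma approx_inner_subdiag_V_const:
  assumes ai: "approx_inner x1 dt" and ai': "approx_inner x1 dt'"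
    and diff: "\<And>l. dt Vop (l + 1) l - dt' Vop (l + 1) l = c"
  shows "c = 0"
proof (rule ccontr)
  assume "c \<noteq> 0"
  then have c: "0 < cmod c" by simp
  obtain y where yB: "\<And>j. y j \<in> Bstar x1" and y: "mtendsto (\<lambda>j. mcomm (y j) Vop) (dt Vop)"
    using ai Bpoly.gen_V unfolding approx_inner_def by blast
  obtain y' where yB': "\<And>j. y' j \<in> Bstar x1" and y': "mtendsto (\<lambda>j. mcomm (y' j) Vop) (dt' Vop)"
    using ai' Bpoly.gen_V unfolding approx_inner_def by blast
  obtain J where J: "\<And>l k. cmod (mcomm (y J) Vop l k - dt Vop l k) \<le> cmod c / 4"
    and J': "\<And>l k. cmod (mcomm (y' J) Vop l k - dt' Vop l k) \<le> cmod c / 4"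
    using mtendsto_entries[OF y, of "cmod c / 4"] mtendsto_entries[OF y', of "cmod c / 4"] c
    by (metis (no_types, opaque_lifting) divide_pos_pos max.cobounded1 max.cobounded2 zero_less_numeral)
  define z where "z = (\<lambda>i. y J i i - y' J i i)"
  define F where "F = (\<lambda>i. z i - of_int i * c)"
  have "F (i + 1) - F i = (mcomm (y J) Vop (i + 1) i - dt Vop (i + 1) i)
      - (mcomm (y' J) Vop (i + 1) i - dt' Vop (i + 1) i)" for i
    using diff[of i] unfolding F_def z_def mcomm_V_subdiag by (simp add: algebra_simps)
  then have "cmod (F (i + 1) - F i) \<le> cmod c / 4 + cmod c / 4" for i
    by (metis J J' norm_triangle_le_diff add_mono)
  then have F: "cmod (F (int n) - F 0) \<le> real n * (cmod c / 2)" for n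
    using norm_diff_le_steps[of F "cmod c / 4 + cmod c / 4" "int n" 0] by simp
  define K where "K = mnorm (y J) + mnorm (y' J)"
  have z: "cmod (z i) \<le> K" for i
    unfolding z_def K_def
    using norm_entry_le_mnorm[OF Bstar_bounded[OF yB], of J i i] norm_entry_le_mnorm[OF Bstar_bounded[OF yB'], of J i i]
      norm_triangle_ineq4[of "y J i i" "y' J i i"] by linarith
  obtain n :: nat where n: "4 * K / cmod c < real n" using reals_Archimedean2 by blast
  have "of_nat n * c = (z (int n) - z 0) - (F (int n) - F 0)" unfolding F_def by simp
  then have "real n * cmod c = cmod ((z (int n) - z 0) - (F (int n) - F 0))"
    by (metis norm_mult norm_of_nat)
  also have "\<dots> \<le> cmod (z (int n) - z 0) + cmod (F (int n) - F 0)"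
    by (rule norm_triangle_ineq4)
  also have "\<dots> \<le> 2 * K + real n * (cmod c / 2)"
    using z[of "int n"] z[of 0] F[of n] norm_triangle_ineq4[of "z (int n)" "z 0"] by linarith
  finally have "real n * cmod c \<le> 4 * K" by simp
  with n c show False by (simp add: field_simps)
qed

lemma decomposition_unique:
  assumes A: "decomposition x1 \<delta> c D dt" and B: "decomposition x1 \<delta> c' D' dt'"
  shows "c' = c \<and> (\<forall>f\<in>Fspan. D' f = D f) \<and> (\<forall>b\<in>Bpoly x1. dt' b = dt b)"
proof -
  obtain d where phi: "phi_inv_derivation x1 D" and ai: "approx_inner x1 dt"
    and dp: "is_delta_partial x1 D d"
    and eq: "\<And>b. b \<in> Bpoly x1 \<Longrightarrow> \<delta> b = madd (madd (msc c (Lcomm b)) (d b)) (dt b)"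
    using A unfolding decomposition_def by blast
  obtain d' where phi': "phi_inv_derivation x1 D'" and ai': "approx_inner x1 dt'"
    and dp': "is_delta_partial x1 D' d'"
    and eq': "\<And>b. b \<in> Bpoly x1 \<Longrightarrow> \<delta> b = madd (madd (msc c' (Lcomm b)) (d' b)) (dt' b)"
    using B unfolding decomposition_def by blast
  \<comment> \<open>the subdiagonal of \<open>\<delta>(V)\<close>: \<open>[\<bbbL>, V] = V\<close> while \<open>\<delta>\<^sub>\<partial>(V) = 0\<close>\<close>
  have "d Vop = mzero" "d' Vop = mzero"
    using dp dp' unfolding is_delta_partial_def by auto
  moreover have "Lcomm Vop (l + 1) l = 1" for l by (simp add: Lcomm_def Vop_def)
  moreover have "madd (madd (msc c (Lcomm Vop)) (d Vop)) (dt Vop) (l + 1) l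
      = madd (madd (msc c' (Lcomm Vop)) (d' Vop)) (dt' Vop) (l + 1) l" for l
    using eq[OF Bpoly.gen_V] eq'[OF Bpoly.gen_V] by simp
  ultimately have subdiag: "c + dt Vop (l + 1) l = c' + dt' Vop (l + 1) l" for l
    by (simp add: madd_def msc_def mzero_def)
  have "dt Vop (l + 1) l - dt' Vop (l + 1) l = c' - c" for l
    using subdiag[of l] by (simp add: algebra_simps)
  then have cc: "c' = c" using approx_inner_subdiag_V_const[OF ai ai'] by simp
  \<comment> \<open>the diagonal of \<open>\<delta>(M\<^sub>f)\<close>: \<open>[\<bbbL>, M\<^sub>f]\<close> and the approximately inner part vanish there\<close>
  have D_eq: "D' f = D f" if f: "f \<in> Fspan" for f
  proof (rule continuous_eq_on_orbit)
    have Mf: "Mop x1 f \<in> Bpoly x1" by (rule Mop_Fspan_Bpoly[OF f])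
    fix l
    show "D' f (xs l) = D f (xs l)"
      using eq[OF Mf] eq'[OF Mf] dp dp' f approx_inner_Mop_diag[OF ai Mf, of l] approx_inner_Mop_diag[OF ai' Mf, of l]
      by (auto simp: is_delta_partial_def madd_def msc_def Lcomm_def Mop_def dest!: fun_cong[of _ _ l])
  qed (use phi phi' f in \<open>auto simp: phi_inv_derivation_def\<close>)
  have "is_delta_partial x1 D d'"
    using dp' D_eq unfolding is_delta_partial_def by auto
  then have "d' b = d b" if "b \<in> Bpoly x1" for b
    using is_delta_partial_unique[OF _ dp that] by blast
  then have "dt' b = dt b" if "b \<in> Bpoly x1" for b
    using eq[OF that] eq'[OF that] that cc by (simp add: madd_def fun_eq_iff)
  with cc D_eq show ?thesis by blast
qed

end

theorem proposition3p13:
  fixes x1 :: "'g::{ab_group_add, t2_space}" and \<delta> :: "mat \<Rightarrow> mat"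
  assumes "compact (UNIV :: 'g set)"
    and "infinite (UNIV :: 'g set)"
    and "continuous_on UNIV (\<lambda>p :: 'g \<times> 'g. fst p + snd p)"
    and "continuous_on UNIV (\<lambda>x :: 'g. - x)"
    and "closure (range (\<lambda>n :: int. zmul n x1)) = UNIV"
    and "derivation_on (Bpoly x1) \<delta>"
    and "\<delta> ` Bpoly x1 \<subseteq> Bstar x1"
    and "invariant_der x1 \<delta>"
  shows "\<exists>c0 D dt. decomposition x1 \<delta> c0 D dt \<and>
           (\<forall>c0' D' dt'. decomposition x1 \<delta> c0' D' dt' \<longrightarrow>
              c0' = c0 \<and> (\<forall>f\<in>Fspan. D' f = D f) \<and> (\<forall>b\<in>Bpoly x1. dt' b = dt b))"
proof -
  interpret invariant_derivation x1 \<delta>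
    using assms(1,3-8) by unfold_locales
  show ?thesis
    using decomposition_exists decomposition_unique by blast
qed

end
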